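(* Simple reachability problems are algorithmically decidable for CFSM protocols with the recognizable channel property: there is an algorithm which, given such a protocol $\mathbf P$ and a global state $(S',C')$ of $\mathbf P$, decides whether $(S',C')$ is reachable; in particular, the deadlock problem ("is $\mathbf P$ deadlock-free?") is decidable for such protocols.
   Context: A CFSM protocol $\mathbf P$ has a finite directed communication graph $G=(N,E)$ (edge $\xi$ has tail $-\xi$, head $+\xi$), pairwise disjoint finite message sets $M_\xi$, and for each $j\in N$ a finite state machine $F_j=(K_j,\Sigma_j,T_j,h_j)$: finite state set $K_j$, initial state $h_j$, alphabet $\Sigma_j=\{+b: b\in M_\xi,\ j=+\xi\}\cup\{-b: b\in M_\xi,\ j=-\xi\}$, transitions $T_j\subseteq K_j\times\Sigma_j\times K_j$ ($+b$ = receive, $-b$ = send). A composite state is $S=(p_j:j\in N)$; a channel content is $C=(x_\xi:\xi\in E)$, $x_\xi\in M_\xi^*$; global states are pairs $(S,C)$; $C^0$ has all components empty; $S^0=(h_j:j\in N)$. A step: some machine $F_i$ takes $p_i\xrightarrow{-b}q_i$ with $b\in M_\beta$, $i=-\beta$, appending $b$ to the end of $x_\beta$; or takes $p_i\xrightarrow{+b}q_i$ with $b\in M_\beta$, $i=+\beta$, provided $x_\beta$ begins with $b$, removing it; all else unchanged. Reachable means reachable from $(S^0,C^0)$ by finitely many steps. A state is a receive state if it has no outgoing $-b$ transition; $(S,C)$ is deadlocked if all components of $S$ are receive states and $C=C^0$; deadlock-free means no deadlocked global state is reachable. $\mathbf P$ has the recognizable channel property if for every composite state $S$ the set $\mathbf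 L(S)=\{C:(S,C)\text{ reachable}\}$ is a finite union of sets $\prod_{\xi\in E}L_\xi$ with each $L_\xi\subseteq M_\xi^*$ regular. *)

theory Defs
  imports Main "HOL-Library.Nat_Bijection"
begin

text \<open>Nodes are 0..<n (n = number of machines), edges are 0..<m.
  Edge xi is given by the pair (tail, head) = (-xi, +xi).  Machine j is (K_j, h_j, T_j), where
  K_j is the (finite) set of a list, h_j the initial state and T_j the
  list of transitions (p, a, q); the action Snd b is -b (send), Rcv b is +b
  (receive).\<close>

datatype act = Snd nat | Rcv nat

datatype protocol = Protocol
  (p_edges: "(nat \<times> nat) list")
  (p_msgs: "nat list list")
  (p_machines: "(nat list \<times> nat \<times> (nat \<times> act \<times> nat) list) list")

definition nnodes :: "protocol \<Rightarrow> nat" where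
  "nnodes P = length (p_machines P)"

definition nedges :: "protocol \<Rightarrow> nat" where
  "nedges P = length (p_edges P)"

definition tl_of :: "protocol \<Rightarrow> nat \<Rightarrow> nat" where
  "tl_of P xi = fst (p_edges P ! xi)"

definition hd_of :: "protocol \<Rightarrow> nat \<Rightarrow> nat" where
  "hd_of P xi = snd (p_edges P ! xi)"

definition Msg :: "protocol \<Rightarrow> nat \<Rightarrow> nat set" where
  "Msg P xi = set (p_msgs P ! xi)"

definition Kst :: "protocol \<Rightarrow> nat \<Rightarrow> nat set" where
  "Kst P j = set (fst (p_machines P ! j))"

definition init_st :: "protocol \<Rightarrow> nat \<Rightarrow> nat" where
  "init_st P j = fst (snd (p_machines P ! j))"

definition Trans :: "protocol \<Rightarrow> nat \<Rightarrow> (nat \<times> act \<times> nat) set" where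
  "Trans P j = set (snd (snd (p_machines P ! j)))"

definition alphabet :: "protocol \<Rightarrow> nat \<Rightarrow> act set" where
  "alphabet P j =
     {Rcv b | b. \<exists>xi<nedges P. b \<in> Msg P xi \<and> hd_of P xi = j}
   \<union> {Snd b | b. \<exists>xi<nedges P. b \<in> Msg P xi \<and> tl_of P xi = j}"

definition wf_protocol :: "protocol \<Rightarrow> bool" where
  "wf_protocol P \<longleftrightarrow>
     length (p_msgs P) = nedges P
   \<and> (\<forall>xi<nedges P. tl_of P xi < nnodes P \<and> hd_of P xi < nnodes P)
   \<and> (\<forall>xi<nedges P. \<forall>eta<nedges P. xi \<noteq> eta \<longrightarrow> Msg P xi \<inter> Msg P eta = {})
   \<and> (\<forall>j<nnodes P. init_st P j \<in> Kst P j
        \<and> (\<forall>(p,a,q)\<in>Trans P j. p \<in> Kst P j \<and> q \<in> Kst P j \<and> a \<in> alphabet P j))"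

text \<open>A composite state is a list S of length n (S!j = p_j); a channel
  content is a list C of length m (C!xi = x_xi).\<close>

definition S0 :: "protocol \<Rightarrow> nat list" where
  "S0 P = map (\<lambda>j. init_st P j) [0..<nnodes P]"

definition C0 :: "protocol \<Rightarrow> nat list list" where
  "C0 P = replicate (nedges P) []"

definition step :: "protocol \<Rightarrow> nat list \<times> nat list list \<Rightarrow> nat list \<times> nat list list \<Rightarrow> bool" where
  "step P = (\<lambda>(S, C) (S', C').
     \<exists>i<nnodes P. \<exists>q b. \<exists>beta<nedges P. b \<in> Msg P beta \<and>
       (((S ! i, Snd b, q) \<in> Trans P i \<and> tl_of P beta = i
          \<and> S' = S[i := q] \<and> C' = C[beta := C ! beta @ [b]])
      \<or> ((S ! i, Rcv b, q) \<in> Trans P i \<and> hd_of P beta = i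
          \<and> C ! beta \<noteq> [] \<and> hd (C ! beta) = b
          \<and> S' = S[i := q] \<and> C' = C[beta := tl (C ! beta)])))"

definition reachable :: "protocol \<Rightarrow> nat list \<Rightarrow> nat list list \<Rightarrow> bool" where
  "reachable P S C \<longleftrightarrow> (step P)\<^sup>*\<^sup>* (S0 P, C0 P) (S, C)"

definition composite_state :: "protocol \<Rightarrow> nat list \<Rightarrow> bool" where
  "composite_state P S \<longleftrightarrow> length S = nnodes P \<and> (\<forall>j<nnodes P. S ! j \<in> Kst P j)"

definition channel_content :: "protocol \<Rightarrow> nat list list \<Rightarrow> bool" where
  "channel_content P C \<longleftrightarrow> length C = nedges P \<and> (\<forall>xi<nedges P. C ! xi \<in> lists (Msg P xi))"

definition global_state :: "protocol \<Rightarrow> nat list \<Rightarrow> nat list list \<Rightarrow> bool" where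
  "global_state P S C \<longleftrightarrow> composite_state P S \<and> channel_content P C"

definition receive_state :: "protocol \<Rightarrow> nat \<Rightarrow> nat \<Rightarrow> bool" where
  "receive_state P j p \<longleftrightarrow> \<not> (\<exists>b q. (p, Snd b, q) \<in> Trans P j)"

definition deadlocked :: "protocol \<Rightarrow> nat list \<Rightarrow> nat list list \<Rightarrow> bool" where
  "deadlocked P S C \<longleftrightarrow> (\<forall>j<nnodes P. receive_state P j (S ! j)) \<and> C = C0 P"

definition deadlock_free :: "protocol \<Rightarrow> bool" where
  "deadlock_free P \<longleftrightarrow> \<not> (\<exists>S C. reachable P S C \<and> deadlocked P S C)"

definition regular_lang :: "nat list set \<Rightarrow> bool" where
  "regular_lang L \<longleftrightarrow> (\<exists>(Q :: nat set) \<delta> q0 F. finite Q \<and> q0 \<in> Q \<and> F \<subseteq> Q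
      \<and> (\<forall>q\<in>Q. \<forall>a. \<delta> q a \<in> Q)
      \<and> L = {w. foldl \<delta> q0 w \<in> F})"

definition prod_lang :: "nat list set list \<Rightarrow> nat list list set" where
  "prod_lang Ls = {C. length C = length Ls \<and> (\<forall>xi<length Ls. C ! xi \<in> Ls ! xi)}"

definition Lset :: "protocol \<Rightarrow> nat list \<Rightarrow> nat list list set" where
  "Lset P S = {C. reachable P S C}"

definition recognizable_channel_property :: "protocol \<Rightarrow> bool" where
  "recognizable_channel_property P \<longleftrightarrow>
     (\<forall>S. composite_state P S \<longrightarrow>
        (\<exists>F. finite F
           \<and> (\<forall>Ls\<in>F. length Ls = nedges P
                 \<and> (\<forall>xi<nedges P. Ls ! xi \<subseteq> lists (Msg P xi) \<and> regular_lang (Ls ! xi)))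
           \<and> Lset P S = (\<Union>Ls\<in>F. prod_lang Ls)))"

datatype recf = Zf | Sf | Proj nat | Cn recf "recf list" | Pr recf recf | Mn recf

inductive rec_eval :: "recf \<Rightarrow> nat list \<Rightarrow> nat \<Rightarrow> bool" where
  zero: "rec_eval Zf xs 0"
| succ: "rec_eval Sf (x # xs) (Suc x)"
| proj: "i < length xs \<Longrightarrow> rec_eval (Proj i) xs (xs ! i)"
| comp: "list_all2 (\<lambda>g y. rec_eval g xs y) gs ys \<Longrightarrow> rec_eval f ys y \<Longrightarrow> rec_eval (Cn f gs) xs y"
| pr0: "rec_eval f xs y \<Longrightarrow> rec_eval (Pr f g) (0 # xs) y"
| prS: "rec_eval (Pr f g) (k # xs) r \<Longrightarrow> rec_eval g (k # r # xs) y
          \<Longrightarrow> rec_eval (Pr f g) (Suc k # xs) y"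
| mn: "rec_eval f (y # xs) 0 \<Longrightarrow> (\<forall>z<y. \<exists>v. v > 0 \<and> rec_eval f (z # xs) v)
          \<Longrightarrow> rec_eval (Mn f) xs y"

definition decides_on :: "recf \<Rightarrow> ('a \<Rightarrow> nat) \<Rightarrow> ('a \<Rightarrow> bool) \<Rightarrow> ('a \<Rightarrow> bool) \<Rightarrow> bool" where
  "decides_on f c D Q \<longleftrightarrow>
     (\<forall>x. D x \<longrightarrow> (\<forall>r. rec_eval f [c x] r \<longleftrightarrow> r = (if Q x then 1 else 0)))"

fun enc_act :: "act \<Rightarrow> nat" where
  "enc_act (Snd b) = 2 * b"
| "enc_act (Rcv b) = 2 * b + 1"

definition enc_trans :: "nat \<times> act \<times> nat \<Rightarrow> nat" where
  "enc_trans t = (case t of (p, a, q) \<Rightarrow> list_encode [p, enc_act a, q])"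

definition enc_machine :: "nat list \<times> nat \<times> (nat \<times> act \<times> nat) list \<Rightarrow> nat" where
  "enc_machine M = (case M of (K, h, T) \<Rightarrow>
     list_encode [list_encode K, h, list_encode (map enc_trans T)])"

definition enc_protocol :: "protocol \<Rightarrow> nat" where
  "enc_protocol P = list_encode
     [list_encode (map prod_encode (p_edges P)),
      list_encode (map list_encode (p_msgs P)),
      list_encode (map enc_machine (p_machines P))]"

definition enc_instance :: "protocol \<times> nat list \<times> nat list list \<Rightarrow> nat" where
  "enc_instance x = (case x of (P, S, C) \<Rightarrow>
     list_encode [enc_protocol P, list_encode S, list_encode (map list_encode C)])"

end

(* Reachability of a global state is semi-decidable by enumerating paths. Under the recognizable
   channel property non-reachability is semi-decidable as well. For every channel, the finitely
   many regular languages occurring in the decompositions of the sets L(S) define a right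
   congruence of finite index (equality of all residuals), and every set of reachable channel
   contents is saturated by it. So the reachable states, abstracted to the composite state and the
   vector of congruence classes, form a finite set; together with the quotient DFAs and the finite
   relation between the classes of b # w and of w, it is a finitely checkable inductive invariant.
   It excludes every unreachable state, and every such invariant excludes only unreachable
   states. An unbounded search for a witness of either kind therefore decides reachability.
   Deadlock-freedom is decided the same way, using invariants none of whose abstract states with
   empty channels is a deadlock. *)

theory Submission
  imports Defs
begin

section \<open>Computable functions on natural numbers\<close>

inductive_cases rec_eval_ZfE: "rec_eval Zf xs r"
inductive_cases rec_eval_SfE: "rec_eval Sf xs r"
inductive_cases rec_eval_ProjE: "rec_eval (Proj i) xs r"
inductive_cases rec_eval_CnE: "rec_eval (Cn f gs) xs r"
inductive_cases rec_eval_Pr0E: "rec_eval (Pr f g) (0 # xs) r"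
inductive_cases rec_eval_PrSucE: "rec_eval (Pr f g) (Suc k # xs) r"
inductive_cases rec_eval_MnE: "rec_eval (Mn f) xs r"

lemma rec_eval_Zf_iff: "rec_eval Zf xs r \<longleftrightarrow> r = 0"
  by (auto elim: rec_eval_ZfE intro: rec_eval.intros)

lemma rec_eval_Sf_iff: "rec_eval Sf [x] r \<longleftrightarrow> r = Suc x"
  by (auto elim: rec_eval_SfE intro: rec_eval.intros)

lemma rec_eval_Proj_iff: "i < length xs \<Longrightarrow> rec_eval (Proj i) xs r \<longleftrightarrow> r = xs ! i"
  by (auto elim: rec_eval_ProjE intro: rec_eval.intros)

lemma rec_eval_Cn_iff:
  "rec_eval (Cn f gs) xs r \<longleftrightarrow> (\<exists>ys. list_all2 (\<lambda>g y. rec_eval g xs y) gs ys \<and> rec_eval f ys r)"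
  by (auto elim: rec_eval_CnE intro: rec_eval.intros)

lemma rec_eval_Cn1_iff: "rec_eval (Cn f [g]) xs r \<longleftrightarrow> (\<exists>y. rec_eval g xs y \<and> rec_eval f [y] r)"
  by (auto simp add: rec_eval_Cn_iff list_all2_Cons1)

lemma rec_eval_Cn2_iff:
  "rec_eval (Cn f [g1, g2]) xs r \<longleftrightarrow> (\<exists>y1 y2. rec_eval g1 xs y1 \<and> rec_eval g2 xs y2 \<and> rec_eval f [y1, y2] r)"
  by (auto simp add: rec_eval_Cn_iff list_all2_Cons1)

lemma rec_eval_Pr_iff:
  assumes f: "\<And>r. rec_eval f xs r \<longleftrightarrow> r = a"
    and g: "\<And>k v r. rec_eval g (k # v # xs) r \<longleftrightarrow> r = h k v"
  shows "rec_eval (Pr f g) (n # xs) r \<longleftrightarrow> r = rec_nat a h n"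
proof (induction n arbitrary: r)
  case 0
  then show ?case using f by (auto elim: rec_eval_Pr0E intro: rec_eval.intros)
next
  case (Suc n)
  then show ?case using g by (auto elim!: rec_eval_PrSucE intro: rec_eval.prS)
qed

lemma rec_eval_Mn_iff:
  assumes f: "\<And>y r. rec_eval f (y # xs) r \<longleftrightarrow> r = q y"
    and ex: "\<exists>y. q y = 0"
  shows "rec_eval (Mn f) xs r \<longleftrightarrow> r = (LEAST y. q y = 0)"
proof
  assume "rec_eval (Mn f) xs r"
  then have "q r = 0" "\<forall>z<r. q z > 0" using f by (auto elim!: rec_eval_MnE)
  then show "r = (LEAST y. q y = 0)"
    by (metis (mono_tags, lifting) LeastI_ex Least_le ex le_neq_implies_less neq0_conv)
next
  assume r: "r = (LEAST y. q y = 0)"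
  then have "q r = 0" using ex by (metis (mono_tags) LeastI_ex)
  moreover have "\<forall>z<r. q z > 0" using r not_less_Least by blast
  ultimately show "rec_eval (Mn f) xs r" using f by (auto intro!: rec_eval.mn)
qed

definition computable :: "(nat \<Rightarrow> nat) \<Rightarrow> bool" where
  "computable g \<longleftrightarrow> (\<exists>F. \<forall>x r. rec_eval F [x] r \<longleftrightarrow> r = g x)"

definition computable2 :: "(nat \<Rightarrow> nat \<Rightarrow> nat) \<Rightarrow> bool" where
  "computable2 g \<longleftrightarrow> (\<exists>F. \<forall>x y r. rec_eval F [x, y] r \<longleftrightarrow> r = g x y)"

lemma computable_comp: "computable h \<Longrightarrow> computable f \<Longrightarrow> computable (\<lambda>z. h (f z))"
  unfolding computable_def
proof (elim exE)
  fix H F assume H: "\<forall>x r. rec_eval H [x] r = (r = h x)" and F: "\<forall>x r. rec_eval F [x] r = (r = f x)"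
  show "\<exists>G. \<forall>x r. rec_eval G [x] r = (r = h (f x))"
    by (rule exI[of _ "Cn H [F]"]) (simp add: rec_eval_Cn1_iff H F)
qed

lemma computable2_comp: "computable2 h \<Longrightarrow> computable f \<Longrightarrow> computable g \<Longrightarrow> computable (\<lambda>z. h (f z) (g z))"
  unfolding computable_def computable2_def
proof (elim exE)
  fix H F G assume H: "\<forall>x y r. rec_eval H [x, y] r = (r = h x y)"
    and F: "\<forall>x r. rec_eval F [x] r = (r = f x)" and G: "\<forall>x r. rec_eval G [x] r = (r = g x)"
  show "\<exists>K. \<forall>x r. rec_eval K [x] r = (r = h (f x) (g x))"
    by (rule exI[of _ "Cn H [F, G]"]) (simp add: rec_eval_Cn2_iff H F G)
qed

lemma computable2_comp2:
  "computable2 h \<Longrightarrow> computable2 f \<Longrightarrow> computable2 g \<Longrightarrow> computable2 (\<lambda>x y. h (f x y) (g x y))"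
  unfolding computable2_def
proof (elim exE)
  fix H F G assume H: "\<forall>x y r. rec_eval H [x, y] r = (r = h x y)"
    and F: "\<forall>x y r. rec_eval F [x, y] r = (r = f x y)" and G: "\<forall>x y r. rec_eval G [x, y] r = (r = g x y)"
  show "\<exists>K. \<forall>x y r. rec_eval K [x, y] r = (r = h (f x y) (g x y))"
    by (rule exI[of _ "Cn H [F, G]"]) (simp add: rec_eval_Cn2_iff H F G)
qed

lemma computable_comp2: "computable h \<Longrightarrow> computable2 f \<Longrightarrow> computable2 (\<lambda>x y. h (f x y))"
  unfolding computable2_def computable_def
proof (elim exE)
  fix H F assume H: "\<forall>x r. rec_eval H [x] r = (r = h x)"
    and F: "\<forall>x y r. rec_eval F [x, y] r = (r = f x y)"
  show "\<exists>K. \<forall>x y r. rec_eval K [x, y] r = (r = h (f x y))"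
    by (rule exI[of _ "Cn H [F]"]) (simp add: rec_eval_Cn1_iff H F)
qed

named_theorems computable_intros

lemma computable_id [computable_intros]: "computable (\<lambda>z. z)"
  unfolding computable_def by (rule exI[of _ "Proj 0"]) (simp add: rec_eval_Proj_iff)

lemma computable2_fst: "computable2 (\<lambda>x y. x)"
  unfolding computable2_def by (rule exI[of _ "Proj 0"]) (simp add: rec_eval_Proj_iff)

lemma computable2_snd: "computable2 (\<lambda>x y. y)"
  unfolding computable2_def by (rule exI[of _ "Proj 1"]) (simp add: rec_eval_Proj_iff)

lemma computable_Suc [computable_intros]: "computable f \<Longrightarrow> computable (\<lambda>z. Suc (f z))"
proof -
  have "computable Suc"
    unfolding computable_def by (rule exI[of _ Sf]) (simp add: rec_eval_Sf_iff)
  then show "computable f \<Longrightarrow> computable (\<lambda>z. Suc (f z))" by (rule computable_comp)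
qed

lemma computable_const [computable_intros]: "computable (\<lambda>z. c)"
proof (induction c)
  case 0
  show ?case unfolding computable_def by (rule exI[of _ Zf]) (simp add: rec_eval_Zf_iff)
next
  case (Suc c)
  then show ?case by (rule computable_Suc)
qed

lemma computable2_const: "computable2 (\<lambda>x y. c)"
  using computable_comp2[OF computable_const computable2_fst] .

lemma computable2_funpow: "computable h \<Longrightarrow> computable2 (\<lambda>n b. (h ^^ n) b)"
  unfolding computable_def computable2_def
proof (elim exE)
  fix H assume H: "\<forall>x r. rec_eval H [x] r = (r = h x)"
  have "rec_eval (Pr (Proj 0) (Cn H [Proj 1])) [n, b] r \<longleftrightarrow> r = rec_nat b (\<lambda>k v. h v) n" for n b r
    by (rule rec_eval_Pr_iff) (simp_all add: rec_eval_Proj_iff rec_eval_Cn1_iff H)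
  moreover have "rec_nat b (\<lambda>k v. h v) n = (h ^^ n) b" for n b
    by (induction n) auto
  ultimately show "\<exists>F. \<forall>x y r. rec_eval F [x, y] r = (r = (h ^^ x) y)" by metis
qed

lemma computable2_plus: "computable2 (+)"
proof -
  have "computable2 (\<lambda>n b. (Suc ^^ n) b)"
    using computable2_funpow[OF computable_Suc[OF computable_id]] by simp
  moreover have "(Suc ^^ n) b = n + b" for n b
    by (induction n) auto
  ultimately show ?thesis by simp
qed

lemma computable2_times: "computable2 (*)"
proof -
  obtain A where A: "\<forall>x y r. rec_eval A [x, y] r = (r = x + y)"
    using computable2_plus unfolding computable2_def by blast
  have "rec_eval (Pr Zf (Cn A [Proj 1, Proj 2])) [n, b] r \<longleftrightarrow> r = rec_nat 0 (\<lambda>k v. v + b) n" for n b r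
    by (rule rec_eval_Pr_iff) (simp_all add: rec_eval_Proj_iff rec_eval_Cn2_iff rec_eval_Zf_iff A)
  moreover have "rec_nat 0 (\<lambda>k v. v + b) n = n * b" for n b
    by (induction n) auto
  ultimately show ?thesis unfolding computable2_def by metis
qed

lemma computable2_minus: "computable2 (-)"
proof -
  have "rec_eval (Pr Zf (Proj 0)) [n] r \<longleftrightarrow> r = rec_nat 0 (\<lambda>k v. k) n" for n r
    by (rule rec_eval_Pr_iff) (simp_all add: rec_eval_Proj_iff rec_eval_Zf_iff)
  moreover have "rec_nat 0 (\<lambda>k v. k) n = n - 1" for n
    by (cases n) auto
  ultimately have "computable (\<lambda>x. x - 1)" unfolding computable_def by metis
  then have "computable2 (\<lambda>n b. ((\<lambda>x. x - 1) ^^ n) b)" by (rule computable2_funpow)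
  moreover have "((\<lambda>x. x - 1) ^^ n) b = b - n" for n b :: nat
    by (induction n) auto
  ultimately have "computable2 (\<lambda>n b. b - n)" by simp
  then show ?thesis using computable2_comp2[OF _ computable2_snd computable2_fst] by fastforce
qed

lemma computable_plus [computable_intros]: "computable f \<Longrightarrow> computable g \<Longrightarrow> computable (\<lambda>z. f z + g z)"
  using computable2_comp[OF computable2_plus] .

lemma computable_minus [computable_intros]: "computable f \<Longrightarrow> computable g \<Longrightarrow> computable (\<lambda>z. f z - g z)"
  using computable2_comp[OF computable2_minus] .

lemma computable_times [computable_intros]: "computable f \<Longrightarrow> computable g \<Longrightarrow> computable (\<lambda>z. f z * g z)"
  using computable2_comp[OF computable2_times] .

lemma computable_funpow [computable_intros]:
  "computable h \<Longrightarrow> computable a \<Longrightarrow> computable b \<Longrightarrow> computable (\<lambda>z. (h ^^ a z) (b z))"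
  using computable2_comp[OF computable2_funpow] .

lemma computable_triangle [computable_intros]: "computable f \<Longrightarrow> computable (\<lambda>z. triangle (f z))"
proof -
  obtain A where A: "\<forall>x y r. rec_eval A [x, y] r = (r = x + y)"
    using computable2_plus unfolding computable2_def by blast
  have "rec_eval (Pr Zf (Cn A [Proj 1, Cn Sf [Proj 0]])) [n] r \<longleftrightarrow> r = rec_nat 0 (\<lambda>k v. v + Suc k) n" for n r
    by (rule rec_eval_Pr_iff) (simp_all add: rec_eval_Proj_iff rec_eval_Cn1_iff rec_eval_Cn2_iff rec_eval_Zf_iff rec_eval_Sf_iff A)
  moreover have "rec_nat 0 (\<lambda>k v. v + Suc k) n = triangle n" for n
    by (induction n) auto
  ultimately have "computable triangle" unfolding computable_def by metis
  then show "computable f \<Longrightarrow> computable (\<lambda>z. triangle (f z))" by (rule computable_comp)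
qed

lemma computable_Least:
  assumes "computable2 q" "\<And>z. \<exists>y. q y z = 0"
  shows "computable (\<lambda>z. LEAST y. q y z = 0)"
proof -
  obtain Q where Q: "\<forall>x y r. rec_eval Q [x, y] r = (r = q x y)"
    using assms(1) unfolding computable2_def by blast
  show ?thesis unfolding computable_def
    by (rule exI[of _ "Mn Q"]) (intro allI rec_eval_Mn_iff, simp_all add: Q assms(2))
qed

definition pair_code :: "nat \<Rightarrow> nat \<Rightarrow> nat" where "pair_code a b = prod_encode (a, b)"
definition pair_fst :: "nat \<Rightarrow> nat" where "pair_fst z = fst (prod_decode z)"
definition pair_snd :: "nat \<Rightarrow> nat" where "pair_snd z = snd (prod_decode z)"

lemma pair_fst_pair_code [simp]: "pair_fst (pair_code a b) = a"
  and pair_snd_pair_code [simp]: "pair_snd (pair_code a b) = b"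
  by (simp_all add: pair_fst_def pair_snd_def pair_code_def)

lemma computable2_pair_code: "computable2 pair_code"
proof -
  have "computable2 (\<lambda>a b. triangle (a + b) + a)"
    by (rule computable2_comp2[OF computable2_plus computable_comp2[OF _ computable2_plus] computable2_fst])
      (rule computable_triangle[OF computable_id])
  moreover have "pair_code = (\<lambda>a b. triangle (a + b) + a)"
    by (simp add: pair_code_def prod_encode_def fun_eq_iff)
  ultimately show ?thesis by simp
qed

lemma triangle_mono: "m \<le> n \<Longrightarrow> triangle m \<le> triangle n"
  unfolding triangle_def by (intro div_le_mono mult_le_mono) auto

lemma prod_decode_triangle:
  assumes "prod_decode z = (a, b)"
  shows "z = triangle (a + b) + a" and "(LEAST s. z < triangle (Suc s)) = a + b"
proof -
  have "z = prod_encode (prod_decode z)" by simp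
  then show z: "z = triangle (a + b) + a" using assms by (simp add: prod_encode_def)
  show "(LEAST s. z < triangle (Suc s)) = a + b"
  proof (rule Least_equality)
    show "z < triangle (Suc (a + b))" using z by simp
    fix s assume "z < triangle (Suc s)"
    then show "a + b \<le> s"
      using triangle_mono[of "Suc s" "a + b"] z by linarith
  qed
qed

lemma computable_Least_triangle: "computable (\<lambda>z. LEAST s. z < triangle (Suc s))"
proof -
  have "computable2 (\<lambda>s z. 1 - (triangle (Suc s) - z))"
    by (intro computable2_comp2[OF computable2_minus computable2_const]
        computable2_comp2[OF computable2_minus _ computable2_snd] computable_comp2[OF _ computable2_fst]
        computable_triangle computable_Suc computable_id)
  moreover have "\<exists>y. 1 - (triangle (Suc y) - z) = 0" for z
  proof -
    have "z < triangle (Suc z)" by (induction z) auto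
    then show ?thesis by (intro exI[of _ z]) simp
  qed
  ultimately have "computable (\<lambda>z. LEAST y. 1 - (triangle (Suc y) - z) = 0)" by (rule computable_Least)
  moreover have "(1 - (triangle (Suc y) - z) = 0) \<longleftrightarrow> z < triangle (Suc y)" for y z by auto
  ultimately show ?thesis by simp
qed

lemma computable_pair_fst [computable_intros]: "computable f \<Longrightarrow> computable (\<lambda>z. pair_fst (f z))"
proof -
  have eq: "pair_fst = (\<lambda>z. z - triangle (LEAST s. z < triangle (Suc s)))"
  proof
    fix z show "pair_fst z = z - triangle (LEAST s. z < triangle (Suc s))"
      using prod_decode_triangle[of z] by (cases "prod_decode z") (simp add: pair_fst_def)
  qed
  have "computable pair_fst" unfolding eq
    by (intro computable_intros computable_comp[OF computable_Least_triangle])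
  then show "computable f \<Longrightarrow> computable (\<lambda>z. pair_fst (f z))" by (rule computable_comp)
qed

lemma computable_pair_snd [computable_intros]: "computable f \<Longrightarrow> computable (\<lambda>z. pair_snd (f z))"
proof -
  have eq: "pair_snd = (\<lambda>z. (LEAST s. z < triangle (Suc s)) - pair_fst z)"
  proof
    fix z show "pair_snd z = (LEAST s. z < triangle (Suc s)) - pair_fst z"
      using prod_decode_triangle[of z] by (cases "prod_decode z") (simp add: pair_fst_def pair_snd_def)
  qed
  have "computable pair_snd" unfolding eq
    by (intro computable_intros computable_Least_triangle)
  then show "computable f \<Longrightarrow> computable (\<lambda>z. pair_snd (f z))" by (rule computable_comp)
qed

definition decidable :: "(nat \<Rightarrow> bool) \<Rightarrow> bool" where
  "decidable P \<longleftrightarrow> computable (\<lambda>z. if P z then 1 else 0)"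

definition decidable2 :: "(nat \<Rightarrow> nat \<Rightarrow> bool) \<Rightarrow> bool" where
  "decidable2 R \<longleftrightarrow> decidable (\<lambda>z. R (pair_fst z) (pair_snd z))"

lemma decidable2I [computable_intros]: "decidable (\<lambda>z. R (pair_fst z) (pair_snd z)) \<Longrightarrow> decidable2 R"
  unfolding decidable2_def .

lemma computable_cong: "computable f \<Longrightarrow> (\<And>z. f z = g z) \<Longrightarrow> computable g"
  by (metis ext)

lemma decidable_eq [computable_intros]: "computable f \<Longrightarrow> computable g \<Longrightarrow> decidable (\<lambda>z. f z = g z)"
  unfolding decidable_def
  by (rule computable_cong[where f="\<lambda>z. 1 - ((f z - g z) + (g z - f z))"], intro computable_intros) auto

lemma decidable_less [computable_intros]: "computable f \<Longrightarrow> computable g \<Longrightarrow> decidable (\<lambda>z. f z < g z)"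
  unfolding decidable_def
  by (rule computable_cong[where f="\<lambda>z. 1 - (1 - (g z - f z))"], intro computable_intros) auto

lemma decidable_not [computable_intros]: "decidable P \<Longrightarrow> decidable (\<lambda>z. \<not> P z)"
  unfolding decidable_def
  by (rule computable_cong[where f="\<lambda>z. 1 - (if P z then 1 else 0)"], intro computable_intros) auto

lemma decidable_conj [computable_intros]: "decidable P \<Longrightarrow> decidable Q \<Longrightarrow> decidable (\<lambda>z. P z \<and> Q z)"
  unfolding decidable_def
  by (rule computable_cong[where f="\<lambda>z. (if P z then 1 else 0) * (if Q z then 1 else 0)"],
      intro computable_intros) auto

lemma decidable_disj [computable_intros]: "decidable P \<Longrightarrow> decidable Q \<Longrightarrow> decidable (\<lambda>z. P z \<or> Q z)"
  using decidable_not[OF decidable_conj[OF decidable_not decidable_not]] by simp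

lemma decidable_imp [computable_intros]: "decidable P \<Longrightarrow> decidable Q \<Longrightarrow> decidable (\<lambda>z. P z \<longrightarrow> Q z)"
  using decidable_disj[OF decidable_not] by simp

lemma computable_If [computable_intros]:
  "decidable P \<Longrightarrow> computable f \<Longrightarrow> computable g \<Longrightarrow> computable (\<lambda>z. if P z then f z else g z)"
  unfolding decidable_def
  by (rule computable_cong[where f="\<lambda>z. (if P z then 1 else 0) * f z + (1 - (if P z then 1 else 0)) * g z"],
      intro computable_intros) auto

lemma computable_Least_pred:
  assumes P: "decidable2 Q" and ex: "\<And>z. \<exists>y. Q y z"
  shows "computable (\<lambda>z. LEAST y. Q y z)"
proof -
  have "computable (\<lambda>w. if Q (pair_fst w) (pair_snd w) then 0 else 1)"
    using P unfolding decidable2_def decidable_def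
    by (rule computable_cong[OF computable_minus[OF computable_const[of 1]]]) simp
  from computable_comp2[OF this computable2_pair_code]
  have "computable2 (\<lambda>y z. if Q y z then 0 else 1)" by simp
  moreover have "\<exists>y. (if Q y z then 0 else 1) = (0::nat)" for z using ex[of z] by auto
  ultimately have "computable (\<lambda>z. LEAST y. (if Q y z then 0 else 1) = (0::nat))"
    by (rule computable_Least)
  moreover have "((if Q y z then 0 else 1) = (0::nat)) \<longleftrightarrow> Q y z" for y z by simp
  ultimately show ?thesis by simp
qed

lemma decidable_all_less [computable_intros]:
  assumes P: "decidable2 P" and t: "computable t"
  shows "decidable (\<lambda>z. \<forall>i<t z. P i z)"
proof -
  let ?first_failure = "\<lambda>z. LEAST i. i = t z \<or> \<not> P i z"
  have "computable ?first_failure"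
  proof (rule computable_Least_pred)
    show "decidable2 (\<lambda>i z. i = t z \<or> \<not> P i z)"
      using P unfolding decidable2_def by (intro computable_intros computable_comp[OF t])
  qed auto
  then have "decidable (\<lambda>z. ?first_failure z = t z)"
    by (intro computable_intros t)
  moreover have "(\<forall>i<t z. P i z) \<longleftrightarrow> ?first_failure z = t z" for z
  proof
    assume "\<forall>i<t z. P i z"
    then show "?first_failure z = t z"
      by (intro Least_equality) (auto simp: not_le, meson not_le)
  next
    assume "?first_failure z = t z"
    then show "\<forall>i<t z. P i z"
      by (metis (mono_tags, lifting) Least_le leD)
  qed
  ultimately show ?thesis unfolding decidable_def by simp
qed

lemma decidable_ex_less [computable_intros]:
  assumes "decidable2 P" and "computable t"
  shows "decidable (\<lambda>z. \<exists>i<t z. P i z)"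
proof -
  have "decidable2 (\<lambda>i z. \<not> P i z)"
    using assms(1) unfolding decidable2_def by (rule decidable_not)
  then have "decidable (\<lambda>z. \<not> (\<forall>i<t z. \<not> P i z))"
    by (intro decidable_not decidable_all_less assms(2))
  then show ?thesis by simp
qed

lemma decides_on_by_witnesses:
  assumes A: "decidable2 A" and B: "decidable2 B"
    and A_iff: "\<And>x. D x \<Longrightarrow> Q x \<longleftrightarrow> (\<exists>w. A (c x) w)"
    and B_iff: "\<And>x. D x \<Longrightarrow> \<not> Q x \<longleftrightarrow> (\<exists>w. B (c x) w)"
  shows "\<exists>f. decides_on f c D Q"
proof -
  have swap: "computable2 (\<lambda>w x. if R x w then 1 else 0)" if "decidable2 R" for R
    using computable_comp2[OF that[unfolded decidable2_def decidable_def]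
        computable2_comp2[OF computable2_pair_code computable2_snd computable2_fst]]
    by simp
  have "decidable2 (\<lambda>x w. \<not> (A x w \<or> B x w))"
    using A B unfolding decidable2_def by (intro computable_intros)
  from swap[OF this] obtain F
    where F: "\<And>w x r. rec_eval F [w, x] r \<longleftrightarrow> r = (if \<not> (A x w \<or> B x w) then 1 else 0)"
    unfolding computable2_def by blast
  from swap[OF A] obtain G where G: "\<And>w x r. rec_eval G [w, x] r \<longleftrightarrow> r = (if A x w then 1 else 0)"
    unfolding computable2_def by blast
  show ?thesis
  proof (rule exI[of _ "Cn G [Mn F, Proj 0]"], unfold decides_on_def, intro allI impI)
    fix x r assume "D x"
    then have ex: "\<exists>w. A (c x) w \<or> B (c x) w" and AQ: "A (c x) w \<Longrightarrow> Q x" and BQ: "B (c x) w \<Longrightarrow> \<not> Q x" for w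
      using A_iff B_iff by blast+
    define w where "w = (LEAST w. A (c x) w \<or> B (c x) w)"
    have M: "rec_eval (Mn F) [c x] r \<longleftrightarrow> r = w" for r
      using rec_eval_Mn_iff[of F "[c x]" "\<lambda>w. if \<not> (A (c x) w \<or> B (c x) w) then 1 else 0"] ex
      by (simp add: F w_def)
    have "A (c x) w \<or> B (c x) w" unfolding w_def by (rule LeastI_ex[OF ex])
    then have "(if A (c x) w then 1 else 0) = (if Q x then 1 else (0::nat))"
      using AQ BQ by auto
    then show "rec_eval (Cn G [Mn F, Proj 0]) [c x] r \<longleftrightarrow> r = (if Q x then 1 else 0)"
      by (simp add: rec_eval_Cn2_iff M rec_eval_Proj_iff G)
  qed
qed

section \<open>Lists coded as natural numbers\<close>

text \<open>Since \<open>prod_decode 0 = (0, 0)\<close>, both \<open>code_tl\<close> and \<open>code_hd\<close> map the code \<open>0\<close>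
  of the empty list to \<open>0\<close>.\<close>

definition code_tl :: "nat \<Rightarrow> nat" where "code_tl c = pair_snd (c - 1)"
definition code_hd :: "nat \<Rightarrow> nat" where "code_hd c = pair_fst (c - 1)"

definition code_nth :: "nat \<Rightarrow> nat \<Rightarrow> nat" (infixl "!#" 100) where
  "c !# i = code_hd ((code_tl ^^ i) c)"

definition code_length :: "nat \<Rightarrow> nat" where
  "code_length c = (LEAST i. (code_tl ^^ i) c = 0)"

definition code_all :: "nat \<Rightarrow> (nat \<Rightarrow> bool) \<Rightarrow> bool" where
  "code_all c P \<longleftrightarrow> (\<forall>k<code_length c. P (c !# k))"

definition code_ex :: "nat \<Rightarrow> (nat \<Rightarrow> bool) \<Rightarrow> bool" where
  "code_ex c P \<longleftrightarrow> (\<exists>k<code_length c. P (c !# k))"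

lemma prod_decode_0: "prod_decode 0 = (0, 0)"
  by (simp add: prod_decode_def prod_decode_aux.simps)

lemma code_tl_list_encode: "code_tl (list_encode xs) = list_encode (tl xs)"
  by (cases xs) (simp_all add: code_tl_def pair_snd_def prod_decode_0)

lemma code_hd_list_encode: "xs \<noteq> [] \<Longrightarrow> code_hd (list_encode xs) = hd xs"
  by (cases xs) (simp_all add: code_hd_def pair_fst_def)

lemma code_tl_funpow: "(code_tl ^^ i) (list_encode xs) = list_encode (drop i xs)"
  by (induction i) (simp_all add: code_tl_list_encode drop_Suc tl_drop)

lemma code_length_list_encode [simp]: "code_length (list_encode xs) = length xs"
  unfolding code_length_def code_tl_funpow
proof (rule Least_equality)
  fix i assume "list_encode (drop i xs) = 0"
  then have "drop i xs = []" by (metis list_encode.simps(1) list_encode_eq)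
  then show "length xs \<le> i" by simp
qed simp

lemma code_nth_list_encode [simp]: "i < length xs \<Longrightarrow> list_encode xs !# i = xs ! i"
  unfolding code_nth_def code_tl_funpow by (simp add: code_hd_list_encode hd_drop_conv_nth)

lemma code_length_0 [simp]: "code_length 0 = 0"
  using code_length_list_encode[of "[]"] by simp

lemma code_length_eq: "code_length c = length (list_decode c)"
  by (metis code_length_list_encode list_decode_inverse)

lemma code_nth_eq: "i < length (list_decode c) \<Longrightarrow> c !# i = list_decode c ! i"
  by (metis code_nth_list_encode list_decode_inverse)

lemma code_eq_list_encode:
  assumes "code_length c = length s" "\<And>j. j < length s \<Longrightarrow> c !# j = s ! j"
  shows "c = list_encode s"
proof -
  have "list_decode c = s"
    by (rule nth_equalityI) (use assms in \<open>simp_all add: code_length_eq code_nth_eq\<close>)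
  then show ?thesis by (metis list_decode_inverse)
qed

lemma code_all_list_encode [simp]: "code_all (list_encode xs) P \<longleftrightarrow> (\<forall>x\<in>set xs. P x)"
  unfolding code_all_def by (simp add: all_set_conv_all_nth)

lemma code_ex_list_encode [simp]: "code_ex (list_encode xs) P \<longleftrightarrow> (\<exists>x\<in>set xs. P x)"
proof -
  have "(\<exists>k<length xs. P (list_encode xs !# k)) \<longleftrightarrow> (\<exists>k<length xs. P (xs ! k))"
    by (metis code_nth_list_encode)
  then show ?thesis unfolding code_ex_def code_length_list_encode by (metis in_set_conv_nth)
qed

lemma computable_code_nth [computable_intros]: "computable f \<Longrightarrow> computable g \<Longrightarrow> computable (\<lambda>z. f z !# g z)"
proof -
  have tl: "computable code_tl" and hd: "computable code_hd"
    unfolding code_tl_def[abs_def] code_hd_def[abs_def] by (intro computable_intros)+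
  show "computable f \<Longrightarrow> computable g \<Longrightarrow> computable (\<lambda>z. f z !# g z)"
    unfolding code_nth_def by (rule computable_comp[OF hd]) (intro computable_funpow tl)
qed

lemma computable_code_length [computable_intros]: "computable f \<Longrightarrow> computable (\<lambda>z. code_length (f z))"
proof -
  have "computable code_tl"
    unfolding code_tl_def[abs_def] by (intro computable_intros)
  have "computable code_length" unfolding code_length_def[abs_def]
  proof (rule computable_Least_pred)
    show "decidable2 (\<lambda>i c. (code_tl ^^ i) c = 0)"
      by (intro computable_intros \<open>computable code_tl\<close>)
    fix c show "\<exists>i. (code_tl ^^ i) c = 0"
      by (metis list_decode_inverse code_tl_funpow drop_all list_encode.simps(1) order_refl)
  qed
  then show "computable f \<Longrightarrow> computable (\<lambda>z. code_length (f z))" by (rule computable_comp)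
qed

lemma decidable_code_all [computable_intros]:
  "decidable2 (\<lambda>k z. P (c z !# k) z) \<Longrightarrow> computable c \<Longrightarrow> decidable (\<lambda>z. code_all (c z) (\<lambda>x. P x z))"
  unfolding code_all_def by (intro decidable_all_less computable_code_length)

lemma decidable_code_ex [computable_intros]:
  "decidable2 (\<lambda>k z. P (c z !# k) z) \<Longrightarrow> computable c \<Longrightarrow> decidable (\<lambda>z. code_ex (c z) (\<lambda>x. P x z))"
  unfolding code_ex_def by (intro decidable_ex_less computable_code_length)

declare list_encode.simps(2) [simp del]

definition nedges_c :: "nat \<Rightarrow> nat" where "nedges_c pc = code_length (pc !# 0)"
definition nnodes_c :: "nat \<Rightarrow> nat" where "nnodes_c pc = code_length (pc !# 2)"
definition tl_of_c :: "nat \<Rightarrow> nat \<Rightarrow> nat" where "tl_of_c pc x = pair_fst (pc !# 0 !# x)"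
definition hd_of_c :: "nat \<Rightarrow> nat \<Rightarrow> nat" where "hd_of_c pc x = pair_snd (pc !# 0 !# x)"
definition msgs_c :: "nat \<Rightarrow> nat \<Rightarrow> nat" where "msgs_c pc x = pc !# 1 !# x"
definition init_c :: "nat \<Rightarrow> nat \<Rightarrow> nat" where "init_c pc j = pc !# 2 !# j !# 1"
definition trans_c :: "nat \<Rightarrow> nat \<Rightarrow> nat" where "trans_c pc j = pc !# 2 !# j !# 2"

lemmas protocol_decoder_defs =
  nedges_c_def nnodes_c_def tl_of_c_def hd_of_c_def msgs_c_def init_c_def trans_c_def

lemma enc_trans_code_nth [simp]:
  "enc_trans t !# 0 = fst t" "enc_trans t !# Suc 0 = enc_act (fst (snd t))" "enc_trans t !# 2 = snd (snd t)"
  by (cases t, simp add: enc_trans_def)+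

lemma enc_act_eq_Snd_code [simp]: "enc_act a = 2 * b \<longleftrightarrow> a = Snd b"
  by (cases a; auto; presburger)

lemma enc_act_eq_Rcv_code [simp]: "enc_act a = Suc (2 * b) \<longleftrightarrow> a = Rcv b"
  by (cases a; auto; presburger)

context
  fixes P :: protocol
begin

lemma nedges_c_enc_protocol [simp]: "nedges_c (enc_protocol P) = nedges P"
  by (simp add: nedges_c_def nedges_def enc_protocol_def)

lemma nnodes_c_enc_protocol [simp]: "nnodes_c (enc_protocol P) = nnodes P"
  by (simp add: nnodes_c_def nnodes_def enc_protocol_def)

lemma tl_of_c_enc_protocol [simp]: "x < nedges P \<Longrightarrow> tl_of_c (enc_protocol P) x = tl_of P x"
  by (simp add: tl_of_c_def tl_of_def nedges_def pair_fst_def enc_protocol_def)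

lemma hd_of_c_enc_protocol [simp]: "x < nedges P \<Longrightarrow> hd_of_c (enc_protocol P) x = hd_of P x"
  by (simp add: hd_of_c_def hd_of_def nedges_def pair_snd_def enc_protocol_def)

lemma init_c_enc_protocol [simp]: "j < nnodes P \<Longrightarrow> init_c (enc_protocol P) j = init_st P j"
  by (cases "p_machines P ! j") (simp add: init_c_def init_st_def nnodes_def enc_protocol_def enc_machine_def)

lemma trans_c_enc_protocol:
  "j < nnodes P \<Longrightarrow> trans_c (enc_protocol P) j = list_encode (map enc_trans (snd (snd (p_machines P ! j))))"
  by (cases "p_machines P ! j") (simp add: trans_c_def nnodes_def enc_protocol_def enc_machine_def)

lemma code_all_trans_c [simp]:
  "j < nnodes P \<Longrightarrow> code_all (trans_c (enc_protocol P) j) F \<longleftrightarrow> (\<forall>t\<in>Trans P j. F (enc_trans t))"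
  by (simp add: trans_c_enc_protocol Trans_def)

lemma code_ex_trans_c [simp]:
  "j < nnodes P \<Longrightarrow> code_ex (trans_c (enc_protocol P) j) F \<longleftrightarrow> (\<exists>t\<in>Trans P j. F (enc_trans t))"
  by (simp add: trans_c_enc_protocol Trans_def)

lemma msgs_c_enc_protocol:
  "wf_protocol P \<Longrightarrow> x < nedges P \<Longrightarrow> msgs_c (enc_protocol P) x = list_encode (p_msgs P ! x)"
  by (simp add: msgs_c_def wf_protocol_def enc_protocol_def)

lemma code_all_msgs_c [simp]:
  "wf_protocol P \<Longrightarrow> x < nedges P \<Longrightarrow> code_all (msgs_c (enc_protocol P) x) F \<longleftrightarrow> (\<forall>b\<in>Msg P x. F b)"
  by (simp add: msgs_c_enc_protocol Msg_def)

lemma code_ex_msgs_c [simp]: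
  "wf_protocol P \<Longrightarrow> x < nedges P \<Longrightarrow> code_ex (msgs_c (enc_protocol P) x) F \<longleftrightarrow> (\<exists>b\<in>Msg P x. F b)"
  by (simp add: msgs_c_enc_protocol Msg_def)

end

lemma set_list_decode_msgs_c:
  "wf_protocol P \<Longrightarrow> x < nedges P \<Longrightarrow> set (list_decode (msgs_c (enc_protocol P) x)) = Msg P x"
  by (simp add: msgs_c_enc_protocol Msg_def)

lemma set_list_decode_trans_c:
  "j < nnodes P \<Longrightarrow> set (list_decode (trans_c (enc_protocol P) j)) = enc_trans ` Trans P j"
  by (simp add: trans_c_enc_protocol Trans_def)

section \<open>Steps and paths on codes\<close>

lemma step_iff_Trans:
  "step P (S, C) (S', C') \<longleftrightarrow>
    (\<exists>i<nnodes P. \<exists>x<nedges P. \<exists>b\<in>Msg P x. \<exists>t\<in>Trans P i. fst t = S ! i \<and> S' = S[i := snd (snd t)] \<and>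
       ((fst (snd t) = Snd b \<and> tl_of P x = i \<and> C' = C[x := C ! x @ [b]]) \<or>
        (fst (snd t) = Rcv b \<and> hd_of P x = i \<and> C ! x \<noteq> [] \<and> hd (C ! x) = b \<and> C' = C[x := tl (C ! x)])))"
  unfolding step_def case_prod_conv by (intro iffI; elim exE conjE bexE disjE) force+

lemma step_send:
  "i < nnodes P \<Longrightarrow> x < nedges P \<Longrightarrow> b \<in> Msg P x \<Longrightarrow> tl_of P x = i \<Longrightarrow> (S ! i, Snd b, q) \<in> Trans P i \<Longrightarrow>
    step P (S, C) (S[i := q], C[x := C ! x @ [b]])"
  unfolding step_def by blast

lemma step_recv:
  "i < nnodes P \<Longrightarrow> x < nedges P \<Longrightarrow> b \<in> Msg P x \<Longrightarrow> hd_of P x = i \<Longrightarrow> (S ! i, Rcv b, q) \<in> Trans P i \<Longrightarrow>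
    C ! x = b # w \<Longrightarrow> step P (S, C) (S[i := q], C[x := w])"
  unfolding step_def by fastforce

lemma reachable_step: "reachable P S C \<Longrightarrow> step P (S, C) (S', C') \<Longrightarrow> reachable P S' C'"
  unfolding reachable_def by (rule rtranclp.rtrancl_into_rtrancl)

lemma step_global_state:
  assumes wf: "wf_protocol P" and st: "step P (S, C) (S', C')" and gs: "global_state P S C"
  shows "global_state P S' C'"
proof -
  from st obtain i q b x a where i: "i < nnodes P" and x: "x < nedges P" and b: "b \<in> Msg P x"
    and tr: "(S ! i, a, q) \<in> Trans P i" and S': "S' = S[i := q]"
    and C': "C' = C[x := C ! x @ [b]] \<or> C' = C[x := tl (C ! x)]"
    unfolding step_def by auto
  have "q \<in> Kst P i" using wf i tr unfolding wf_protocol_def by fast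
  then have cs: "composite_state P S'"
    using gs unfolding S' global_state_def composite_state_def
    by (metis length_list_update nth_list_update_eq nth_list_update_neq)
  have cx: "C ! x \<in> lists (Msg P x)"
    using gs x by (auto simp: global_state_def channel_content_def)
  then have "tl (C ! x) \<in> lists (Msg P x)" "C ! x @ [b] \<in> lists (Msg P x)"
    using b by (cases "C ! x"; simp)+
  then obtain w where "w \<in> lists (Msg P x)" "C' = C[x := w]" using C' by blast
  then have "channel_content P C'"
    using gs x unfolding global_state_def channel_content_def
    by (metis length_list_update nth_list_update_eq nth_list_update_neq)
  with cs show ?thesis by (simp add: global_state_def)
qed

lemma reachable_global_state:
  assumes "wf_protocol P" "reachable P S C"
  shows "global_state P S C"
proof -
  have "global_state P (fst g) (snd g)" if "(step P)\<^sup>*\<^sup>* (S0 P, C0 P) g" for g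
    using that
  proof (induction rule: rtranclp_induct)
    case base
    then show ?case using assms(1)
      by (auto simp: global_state_def composite_state_def channel_content_def S0_def C0_def wf_protocol_def)
  next
    case (step y z)
    then show ?case using step_global_state[OF assms(1), of "fst y" "snd y" "fst z" "snd z"] by simp
  qed
  then show ?thesis using assms(2) by (auto simp: reachable_def)
qed

lemma reachable_lengths:
  "wf_protocol P \<Longrightarrow> reachable P S C \<Longrightarrow> length S = nnodes P \<and> length C = nedges P"
  using reachable_global_state by (auto simp: global_state_def composite_state_def channel_content_def)

definition gstate_code :: "nat list \<Rightarrow> nat list list \<Rightarrow> nat" where
  "gstate_code S C = list_encode [list_encode S, list_encode (map list_encode C)]"

definition decode_gstate :: "nat \<Rightarrow> nat list \<times> nat list list" where
  "decode_gstate g = (list_decode (g !# 0), map list_decode (list_decode (g !# 1)))"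

lemma gstate_code_code_nth [simp]:
  "gstate_code S C !# 0 = list_encode S"
  "gstate_code S C !# 1 = list_encode (map list_encode C)"
  "gstate_code S C !# Suc 0 = list_encode (map list_encode C)"
  by (simp_all add: gstate_code_def)

lemma decode_gstate_code_nth:
  "g !# 0 = list_encode (fst (decode_gstate g))" "g !# 1 = list_encode (map list_encode (snd (decode_gstate g)))"
  by (simp_all add: decode_gstate_def comp_def)

lemma gstate_code_decode_gstate_code_nth:
  "gstate_code (fst (decode_gstate g)) (snd (decode_gstate g)) !# 0 = g !# 0"
  "gstate_code (fst (decode_gstate g)) (snd (decode_gstate g)) !# 1 = g !# 1"
  by (simp_all only: gstate_code_code_nth decode_gstate_code_nth[symmetric])

definition update_code :: "nat \<Rightarrow> nat \<Rightarrow> nat \<Rightarrow> nat \<Rightarrow> bool" where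
  "update_code s' s i q \<longleftrightarrow>
     code_length s' = code_length s \<and> (\<forall>k<code_length s. s' !# k = (if k = i then q else s !# k))"

definition snoc_code :: "nat \<Rightarrow> nat \<Rightarrow> nat \<Rightarrow> bool" where
  "snoc_code u v b \<longleftrightarrow>
     code_length u = Suc (code_length v) \<and> (\<forall>j<code_length v. u !# j = v !# j) \<and> u !# code_length v = b"

definition tl_code :: "nat \<Rightarrow> nat \<Rightarrow> nat \<Rightarrow> bool" where
  "tl_code u v b \<longleftrightarrow>
     0 < code_length v \<and> v !# 0 = b \<and> code_length v = Suc (code_length u) \<and> (\<forall>j<code_length u. u !# j = v !# Suc j)"

lemma update_code_iff: "update_code (list_encode s') (list_encode s) i q \<longleftrightarrow> s' = s[i := q]"
proof
  assume u: "update_code (list_encode s') (list_encode s) i q"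
  then have l: "length s' = length s" by (simp add: update_code_def)
  have "s' ! k = (if k = i then q else s ! k)" if "k < length s" for k
    using u that l by (simp add: update_code_def)
  with l show "s' = s[i := q]"
    by (intro nth_equalityI) (auto simp: nth_list_update)
qed (auto simp: update_code_def nth_list_update)

lemma update_code_channels_iff:
  "x < length C' \<Longrightarrow>
    update_code (list_encode (map list_encode C')) (list_encode (map list_encode C)) x (list_encode (C' ! x)) \<longleftrightarrow>
    length C' = length C \<and> (\<forall>k<length C. k \<noteq> x \<longrightarrow> C' ! k = C ! k)"
  unfolding update_code_def by (auto simp: list_encode_eq)

lemma snoc_code_iff: "snoc_code (list_encode u) (list_encode v) b \<longleftrightarrow> u = v @ [b]"
  unfolding snoc_code_def by (auto simp: list_eq_iff_nth_eq nth_append less_Suc_eq)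

lemma tl_code_iff: "tl_code (list_encode u) (list_encode v) b \<longleftrightarrow> v \<noteq> [] \<and> hd v = b \<and> u = tl v"
proof (cases v)
  case (Cons a v')
  have "tl_code (list_encode u) (list_encode v) b \<longleftrightarrow> a = b \<and> length v' = length u \<and> (\<forall>j<length u. u ! j = v' ! j)"
    by (auto simp: tl_code_def Cons)
  also have "\<dots> \<longleftrightarrow> v \<noteq> [] \<and> hd v = b \<and> u = tl v"
    by (auto simp: Cons list_eq_iff_nth_eq)
  finally show ?thesis .
qed (simp add: tl_code_def)

lemma channel_update_iff:
  "x < length C \<Longrightarrow>
    length C' = length C \<and> (\<forall>k<length C. k \<noteq> x \<longrightarrow> C' ! k = C ! k) \<and> C' ! x = w \<longleftrightarrow> C' = C[x := w]"
  by (auto simp: list_eq_iff_nth_eq nth_list_update)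

text \<open>Updating channel \<open>x\<close> with its own new value \<open>g' !# 1 !# x\<close> just says that \<open>g'\<close> and \<open>g\<close>
  agree on all other channels.\<close>

definition step_code :: "nat \<Rightarrow> nat \<Rightarrow> nat \<Rightarrow> bool" where
  "step_code pc g g' \<longleftrightarrow> code_length (g !# 0) = nnodes_c pc \<and> code_length (g !# 1) = nedges_c pc \<and>
     (\<exists>i<nnodes_c pc. \<exists>x<nedges_c pc. code_ex (msgs_c pc x) (\<lambda>b. code_ex (trans_c pc i) (\<lambda>e.
        e !# 0 = g !# 0 !# i \<and> update_code (g' !# 0) (g !# 0) i (e !# 2) \<and>
        ((e !# 1 = 2 * b \<and> tl_of_c pc x = i \<and>
          update_code (g' !# 1) (g !# 1) x (g' !# 1 !# x) \<and> snoc_code (g' !# 1 !# x) (g !# 1 !# x) b) \<or>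
         (e !# 1 = 2 * b + 1 \<and> hd_of_c pc x = i \<and>
          update_code (g' !# 1) (g !# 1) x (g' !# 1 !# x) \<and> tl_code (g' !# 1 !# x) (g !# 1 !# x) b)))))"

lemma send_channel_code_iff:
  assumes "x < length C"
  shows "update_code (list_encode (map list_encode C')) (list_encode (map list_encode C)) x
        (list_encode (map list_encode C') !# x) \<and>
      snoc_code (list_encode (map list_encode C') !# x) (list_encode (C ! x)) b \<longleftrightarrow> C' = C[x := C ! x @ [b]]"
proof (cases "length C' = length C")
  case True
  then show ?thesis using assms
    by (simp add: update_code_channels_iff snoc_code_iff channel_update_iff[symmetric] conj_commute)
qed (auto simp: update_code_def)

lemma recv_channel_code_iff:
  assumes "x < length C"
  shows "update_code (list_encode (map list_encode C')) (list_encode (map list_encode C)) x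
        (list_encode (map list_encode C') !# x) \<and>
      tl_code (list_encode (map list_encode C') !# x) (list_encode (C ! x)) b \<longleftrightarrow>
        C ! x \<noteq> [] \<and> hd (C ! x) = b \<and> C' = C[x := tl (C ! x)]"
proof (cases "length C' = length C")
  case True
  then show ?thesis using assms
    by (auto simp: update_code_channels_iff tl_code_iff channel_update_iff[symmetric])
qed (auto simp: update_code_def)

lemma step_code_iff:
  assumes "wf_protocol P" "length S = nnodes P" "length C = nedges P"
  shows "step_code (enc_protocol P) (gstate_code S C) (gstate_code S' C') \<longleftrightarrow> step P (S, C) (S', C')"
  unfolding step_code_def step_iff_Trans using assms
  by (simp add: update_code_iff[of S'] send_channel_code_iff recv_channel_code_iff cong: conj_cong)

lemma step_code_decode_gstate:
  assumes "wf_protocol P" "step_code (enc_protocol P) g g'"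
  shows "step P (decode_gstate g) (decode_gstate g')"
proof -
  let ?S = "fst (decode_gstate g)" and ?C = "snd (decode_gstate g)"
  have "step_code (enc_protocol P) g g' =
      step_code (enc_protocol P) (gstate_code ?S ?C) (gstate_code (fst (decode_gstate g')) (snd (decode_gstate g')))"
    unfolding step_code_def gstate_code_decode_gstate_code_nth ..
  moreover have "length ?S = nnodes P" "length ?C = nedges P"
    using assms(2) by (simp_all add: step_code_def decode_gstate_def code_length_eq)
  ultimately show ?thesis using assms step_code_iff by simp
qed

definition init_code :: "nat \<Rightarrow> nat \<Rightarrow> bool" where
  "init_code pc g \<longleftrightarrow> code_length (g !# 0) = nnodes_c pc \<and> (\<forall>j<nnodes_c pc. g !# 0 !# j = init_c pc j)
     \<and> code_length (g !# 1) = nedges_c pc \<and> (\<forall>x<nedges_c pc. code_length (g !# 1 !# x) = 0)"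

lemma init_code_decode_gstate:
  assumes "init_code (enc_protocol P) g"
  shows "decode_gstate g = (S0 P, C0 P)"
proof -
  obtain S C where g: "decode_gstate g = (S, C)" by fastforce
  then have S: "g !# 0 = list_encode S" and C: "g !# 1 = list_encode (map list_encode C)"
    using decode_gstate_code_nth[of g] by simp_all
  have lS: "length S = nnodes P" and lC: "length C = nedges P"
    using assms unfolding init_code_def S C by simp_all
  have "S ! j = init_st P j" if "j < nnodes P" for j
    using assms that lS unfolding init_code_def S by simp
  then have "S = S0 P" using lS by (simp add: S0_def list_eq_iff_nth_eq)
  moreover have "C ! x = []" if "x < nedges P" for x
    using assms that lC unfolding init_code_def C by simp
  then have "C = C0 P" using lC by (intro nth_equalityI) (simp_all add: C0_def)
  ultimately show ?thesis using g by simp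
qed

lemma init_code_gstate_code: "init_code (enc_protocol P) (gstate_code (S0 P) (C0 P))"
  by (simp add: init_code_def S0_def C0_def)

definition last_code :: "nat \<Rightarrow> nat" where "last_code w = w !# (code_length w - 1)"

definition path_code :: "nat \<Rightarrow> nat \<Rightarrow> bool" where
  "path_code pc w \<longleftrightarrow>
     0 < code_length w \<and> init_code pc (w !# 0) \<and> (\<forall>k<code_length w - 1. step_code pc (w !# k) (w !# Suc k))"

lemma successively_rtranclp:
  assumes "successively R xs" "xs \<noteq> []"
  shows "R\<^sup>*\<^sup>* (hd xs) (last xs)"
  using assms
proof (induction xs)
  case (Cons x xs)
  then show ?case
    by (cases xs) (auto intro: converse_rtranclp_into_rtranclp)
qed simp

lemma rtranclp_successively:
  assumes "R\<^sup>*\<^sup>* a b"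
  obtains xs where "xs \<noteq> []" "hd xs = a" "last xs = b" "successively R xs" "\<forall>y\<in>set xs. R\<^sup>*\<^sup>* a y"
proof -
  from assms have "\<exists>xs. xs \<noteq> [] \<and> hd xs = a \<and> last xs = b \<and> successively R xs \<and> (\<forall>y\<in>set xs. R\<^sup>*\<^sup>* a y)"
  proof (induction rule: rtranclp_induct)
    case base
    show ?case by (intro exI[of _ "[a]"]) simp
  next
    case (step y z)
    then obtain xs where "xs \<noteq> []" "hd xs = a" "last xs = y" "successively R xs" "\<forall>y\<in>set xs. R\<^sup>*\<^sup>* a y"
      by blast
    with step show ?case
      by (intro exI[of _ "xs @ [z]"]) (auto simp: successively_append_iff)
  qed
  then show ?thesis using that by blast
qed

lemma path_code_reachable:
  assumes wf: "wf_protocol P" and path: "path_code (enc_protocol P) w"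
  shows "reachable P (fst (decode_gstate (last_code w))) (snd (decode_gstate (last_code w)))"
proof -
  let ?gs = "map decode_gstate (list_decode w)"
  have ne: "?gs \<noteq> []" and hd: "hd ?gs = (S0 P, C0 P)"
    using path init_code_decode_gstate by (auto simp: path_code_def code_length_eq code_nth_eq hd_conv_nth)
  have "successively (step P) ?gs"
    using path step_code_decode_gstate[OF wf]
    by (auto simp: successively_conv_nth path_code_def code_length_eq code_nth_eq)
  from successively_rtranclp[OF this ne] hd
  have "(step P)\<^sup>*\<^sup>* (S0 P, C0 P) (last ?gs)" by simp
  moreover have "last ?gs = decode_gstate (last_code w)"
    using ne by (simp add: last_conv_nth last_code_def code_length_eq code_nth_eq)
  ultimately show ?thesis by (simp add: reachable_def)
qed

lemma reachable_path_code:
  assumes wf: "wf_protocol P" and "reachable P S C"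
  obtains w where "path_code (enc_protocol P) w" "last_code w = gstate_code S C"
proof -
  obtain gs where ne: "gs \<noteq> []" and hd: "hd gs = (S0 P, C0 P)" and last: "last gs = (S, C)"
    and succ: "successively (step P) gs" and reach: "\<forall>g\<in>set gs. (step P)\<^sup>*\<^sup>* (S0 P, C0 P) g"
    using rtranclp_successively assms(2) unfolding reachable_def by metis
  let ?w = "list_encode (map (\<lambda>(S, C). gstate_code S C) gs)"
  have "step_code (enc_protocol P) (?w !# k) (?w !# Suc k)" if k: "k < length gs - 1" for k
  proof -
    obtain S C S' C' where g: "gs ! k = (S, C)" and g': "gs ! Suc k = (S', C')" by fastforce
    have "step P (S, C) (S', C')" using succ k g g' by (metis successively_nth less_diff_conv Suc_eq_plus1)
    moreover have "reachable P S C" using reach k g unfolding reachable_def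
      by (metis Suc_lessD less_diff_conv nth_mem add.commute plus_1_eq_Suc)
    ultimately show ?thesis
      using reachable_lengths[OF wf] step_code_iff[OF wf] k g g' by simp
  qed
  moreover have "init_code (enc_protocol P) (?w !# 0)"
    using ne hd init_code_gstate_code by (cases gs) auto
  ultimately have "path_code (enc_protocol P) ?w"
    using ne by (simp add: path_code_def)
  moreover have "last_code ?w = gstate_code S C"
    using ne last by (simp add: last_code_def last_conv_nth)
  ultimately show thesis by (rule that)
qed

section \<open>Invariant certificates\<close>

lemma code_all_iff: "code_all c P \<longleftrightarrow> (\<forall>y\<in>set (list_decode c). P y)"
  by (metis code_all_list_encode list_decode_inverse)

lemma code_ex_iff: "code_ex c P \<longleftrightarrow> (\<exists>y\<in>set (list_decode c). P y)"
  by (metis code_ex_list_encode list_decode_inverse)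

text \<open>An invariant certificate \<open>I = [dfas, good, rel]\<close> provides, for every channel \<open>x\<close>, a DFA
  \<open>dfas !# x = [states, initial state, table]\<close> over \<^term>\<open>Msg P x\<close> whose transition table
  consists of triples \<open>[q, a, q']\<close>; a finite set \<open>good\<close> of abstract global states \<open>[S, v]\<close>, where
  \<open>v !# x\<close> is a state of the DFA of channel \<open>x\<close>; and a set \<open>rel\<close> of quadruples \<open>[x, b, p, q]\<close>
  which must contain, for every word \<open>w\<close>, the states \<open>p\<close> and \<open>q\<close> reached on \<open>b # w\<close> and on
  \<open>w\<close>. The conditions below say that \<open>good\<close> contains the abstraction of the initial state and is
  closed under the abstract effect of sends and receives; then it contains the abstraction of
  every reachable state.\<close>

definition cert_states :: "nat \<Rightarrow> nat \<Rightarrow> nat" where "cert_states I x = I !# 0 !# x !# 0"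
definition cert_init :: "nat \<Rightarrow> nat \<Rightarrow> nat" where "cert_init I x = I !# 0 !# x !# 1"
definition cert_delta :: "nat \<Rightarrow> nat \<Rightarrow> nat" where "cert_delta I x = I !# 0 !# x !# 2"
definition cert_good :: "nat \<Rightarrow> nat" where "cert_good I = I !# 1"
definition cert_rel :: "nat \<Rightarrow> nat" where "cert_rel I = I !# 2"

lemmas cert_accessor_defs = cert_states_def cert_init_def cert_delta_def cert_good_def cert_rel_def

definition update_prefix_code :: "nat \<Rightarrow> nat \<Rightarrow> nat \<Rightarrow> nat \<Rightarrow> nat \<Rightarrow> bool" where
  "update_prefix_code v' v n x q \<longleftrightarrow> (\<forall>y<n. v' !# y = (if y = x then q else v !# y))"

definition dfa_ok :: "nat \<Rightarrow> nat \<Rightarrow> nat \<Rightarrow> bool" where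
  "dfa_ok pc I x \<longleftrightarrow> code_ex (cert_states I x) (\<lambda>q. q = cert_init I x)
     \<and> code_all (cert_states I x) (\<lambda>q. code_all (msgs_c pc x) (\<lambda>a. code_ex (cert_delta I x) (\<lambda>d.
         d !# 0 = q \<and> d !# 1 = a \<and> code_ex (cert_states I x) (\<lambda>q'. q' = d !# 2))))
     \<and> code_all (cert_delta I x) (\<lambda>d1. code_all (cert_delta I x) (\<lambda>d2.
         d1 !# 0 = d2 !# 0 \<and> d1 !# 1 = d2 !# 1 \<longrightarrow> d1 !# 2 = d2 !# 2))"

definition good_init_ok :: "nat \<Rightarrow> nat \<Rightarrow> bool" where
  "good_init_ok pc I \<longleftrightarrow> code_ex (cert_good I) (\<lambda>G.
      code_length (G !# 0) = nnodes_c pc \<and> (\<forall>j<nnodes_c pc. G !# 0 !# j = init_c pc j)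
      \<and> (\<forall>x<nedges_c pc. G !# 1 !# x = cert_init I x))"

definition good_send_closed :: "nat \<Rightarrow> nat \<Rightarrow> bool" where
  "good_send_closed pc I \<longleftrightarrow> code_all (cert_good I) (\<lambda>G. \<forall>i<nnodes_c pc. \<forall>x<nedges_c pc. tl_of_c pc x = i \<longrightarrow>
     code_all (msgs_c pc x) (\<lambda>b. code_all (trans_c pc i) (\<lambda>e. code_all (cert_delta I x) (\<lambda>d.
       e !# 0 = G !# 0 !# i \<and> e !# 1 = 2 * b \<and> d !# 0 = G !# 1 !# x \<and> d !# 1 = b \<longrightarrow>
       code_ex (cert_good I) (\<lambda>G'. update_code (G' !# 0) (G !# 0) i (e !# 2) \<and>
         update_prefix_code (G' !# 1) (G !# 1) (nedges_c pc) x (d !# 2))))))"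

definition good_recv_closed :: "nat \<Rightarrow> nat \<Rightarrow> bool" where
  "good_recv_closed pc I \<longleftrightarrow> code_all (cert_good I) (\<lambda>G. \<forall>i<nnodes_c pc. \<forall>x<nedges_c pc. hd_of_c pc x = i \<longrightarrow>
     code_all (msgs_c pc x) (\<lambda>b. code_all (trans_c pc i) (\<lambda>e. code_all (cert_rel I) (\<lambda>r.
       e !# 0 = G !# 0 !# i \<and> e !# 1 = 2 * b + 1 \<and> r !# 0 = x \<and> r !# 1 = b \<and> r !# 2 = G !# 1 !# x \<longrightarrow>
       code_ex (cert_good I) (\<lambda>G'. update_code (G' !# 0) (G !# 0) i (e !# 2) \<and>
         update_prefix_code (G' !# 1) (G !# 1) (nedges_c pc) x (r !# 3))))))"

definition rel_init_ok :: "nat \<Rightarrow> nat \<Rightarrow> bool" where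
  "rel_init_ok pc I \<longleftrightarrow> (\<forall>x<nedges_c pc. code_all (msgs_c pc x) (\<lambda>b. code_all (cert_delta I x) (\<lambda>d.
      d !# 0 = cert_init I x \<and> d !# 1 = b \<longrightarrow>
      code_ex (cert_rel I) (\<lambda>r. r !# 0 = x \<and> r !# 1 = b \<and> r !# 2 = d !# 2 \<and> r !# 3 = cert_init I x))))"

definition rel_closed :: "nat \<Rightarrow> nat \<Rightarrow> bool" where
  "rel_closed pc I \<longleftrightarrow> code_all (cert_rel I) (\<lambda>r. r !# 0 < nedges_c pc \<longrightarrow>
      code_all (msgs_c pc (r !# 0)) (\<lambda>a. code_all (cert_delta I (r !# 0)) (\<lambda>d1. code_all (cert_delta I (r !# 0)) (\<lambda>d2.
        d1 !# 0 = r !# 2 \<and> d1 !# 1 = a \<and> d2 !# 0 = r !# 3 \<and> d2 !# 1 = a \<longrightarrow>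
        code_ex (cert_rel I) (\<lambda>r'. r' !# 0 = r !# 0 \<and> r' !# 1 = r !# 1 \<and> r' !# 2 = d1 !# 2 \<and> r' !# 3 = d2 !# 2)))))"

definition invariant_cert :: "nat \<Rightarrow> nat \<Rightarrow> bool" where
  "invariant_cert pc I \<longleftrightarrow> (\<forall>x<nedges_c pc. dfa_ok pc I x) \<and> good_init_ok pc I
     \<and> good_send_closed pc I \<and> good_recv_closed pc I \<and> rel_init_ok pc I \<and> rel_closed pc I"

definition cert_state_set :: "nat \<Rightarrow> nat \<Rightarrow> nat set" where
  "cert_state_set I x = set (list_decode (cert_states I x))"

definition cert_trans :: "nat \<Rightarrow> nat \<Rightarrow> nat \<Rightarrow> nat \<Rightarrow> nat \<Rightarrow> bool" where
  "cert_trans I x q a q' \<longleftrightarrow> (\<exists>d\<in>set (list_decode (cert_delta I x)). d !# 0 = q \<and> d !# 1 = a \<and> d !# 2 = q')"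

definition cert_next :: "nat \<Rightarrow> nat \<Rightarrow> nat \<Rightarrow> nat \<Rightarrow> nat" where
  "cert_next I x q a = (THE q'. cert_trans I x q a q')"

definition cert_run :: "nat \<Rightarrow> nat \<Rightarrow> nat list \<Rightarrow> nat" where
  "cert_run I x w = foldl (cert_next I x) (cert_init I x) w"

definition cert_rel_holds :: "nat \<Rightarrow> nat \<Rightarrow> nat \<Rightarrow> nat \<Rightarrow> nat \<Rightarrow> bool" where
  "cert_rel_holds I x b p q \<longleftrightarrow>
     (\<exists>r\<in>set (list_decode (cert_rel I)). r !# 0 = x \<and> r !# 1 = b \<and> r !# 2 = p \<and> r !# 3 = q)"

definition cert_covers :: "protocol \<Rightarrow> nat \<Rightarrow> nat list \<Rightarrow> nat list list \<Rightarrow> bool" where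
  "cert_covers P I S C \<longleftrightarrow> (\<exists>G\<in>set (list_decode (cert_good I)).
     G !# 0 = list_encode S \<and> (\<forall>x<nedges P. G !# 1 !# x = cert_run I x (C ! x)))"

context
  fixes P :: protocol and I :: nat
  assumes wf: "wf_protocol P" and inv: "invariant_cert (enc_protocol P) I"
begin

lemma dfa_ok_cert:
  assumes "x < nedges P"
  shows "cert_init I x \<in> cert_state_set I x"
    and "\<forall>q\<in>cert_state_set I x. \<forall>a\<in>Msg P x. \<exists>q'\<in>cert_state_set I x. cert_trans I x q a q'"
    and "cert_trans I x q a q1 \<Longrightarrow> cert_trans I x q a q2 \<Longrightarrow> q1 = q2"
proof -
  have "dfa_ok (enc_protocol P) I x" using inv assms by (simp add: invariant_cert_def)
  then have init: "code_ex (cert_states I x) (\<lambda>q. q = cert_init I x)"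
    and total: "code_all (cert_states I x) (\<lambda>q. code_all (msgs_c (enc_protocol P) x) (\<lambda>a.
        code_ex (cert_delta I x) (\<lambda>d. d !# 0 = q \<and> d !# 1 = a \<and> code_ex (cert_states I x) (\<lambda>q'. q' = d !# 2))))"
    and det: "code_all (cert_delta I x) (\<lambda>d1. code_all (cert_delta I x) (\<lambda>d2.
        d1 !# 0 = d2 !# 0 \<and> d1 !# 1 = d2 !# 1 \<longrightarrow> d1 !# 2 = d2 !# 2))"
    unfolding dfa_ok_def by blast+
  from init show "cert_init I x \<in> cert_state_set I x"
    unfolding cert_state_set_def code_ex_iff by blast
  show "\<forall>q\<in>cert_state_set I x. \<forall>a\<in>Msg P x. \<exists>q'\<in>cert_state_set I x. cert_trans I x q a q'"
  proof (intro ballI)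
    fix q a assume q: "q \<in> cert_state_set I x" and a: "a \<in> Msg P x"
    from total q have "code_all (msgs_c (enc_protocol P) x) (\<lambda>a.
        code_ex (cert_delta I x) (\<lambda>d. d !# 0 = q \<and> d !# 1 = a \<and> code_ex (cert_states I x) (\<lambda>q'. q' = d !# 2)))"
      unfolding cert_state_set_def code_all_iff by blast
    with a wf assms obtain d where "d \<in> set (list_decode (cert_delta I x))" "d !# 0 = q" "d !# 1 = a"
        "d !# 2 \<in> set (list_decode (cert_states I x))"
      unfolding code_ex_iff by auto
    then show "\<exists>q'\<in>cert_state_set I x. cert_trans I x q a q'"
      unfolding cert_state_set_def cert_trans_def by blast
  qed
  from det show "cert_trans I x q a q1 \<Longrightarrow> cert_trans I x q a q2 \<Longrightarrow> q1 = q2"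
    unfolding cert_trans_def code_all_iff by metis
qed

lemma cert_next_trans:
  assumes x: "x < nedges P" and q: "q \<in> cert_state_set I x" and a: "a \<in> Msg P x"
  shows "cert_trans I x q a (cert_next I x q a)" and "cert_next I x q a \<in> cert_state_set I x"
proof -
  obtain q' where q': "q' \<in> cert_state_set I x" "cert_trans I x q a q'"
    using dfa_ok_cert(2)[OF x] q a by blast
  then have "cert_next I x q a = q'"
    unfolding cert_next_def using dfa_ok_cert(3)[OF x] by (intro the_equality)
  with q' show "cert_trans I x q a (cert_next I x q a)" "cert_next I x q a \<in> cert_state_set I x"
    by simp_all
qed

lemma cert_run_state: "x < nedges P \<Longrightarrow> w \<in> lists (Msg P x) \<Longrightarrow> cert_run I x w \<in> cert_state_set I x"
proof (induction w rule: rev_induct)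
  case (snoc a w)
  then show ?case using cert_next_trans(2) by (simp add: cert_run_def)
qed (simp add: cert_run_def dfa_ok_cert(1))

lemma cert_rel_holds_cert_run:
  assumes x: "x < nedges P" and b: "b \<in> Msg P x"
  shows "w \<in> lists (Msg P x) \<Longrightarrow> cert_rel_holds I x b (cert_run I x (b # w)) (cert_run I x w)"
proof (induction w rule: rev_induct)
  case Nil
  have "cert_trans I x (cert_init I x) b (cert_run I x [b])"
    using cert_next_trans(1)[OF x dfa_ok_cert(1)[OF x] b] by (simp add: cert_run_def)
  then show ?case
    using inv x b by (fastforce simp: invariant_cert_def rel_init_ok_def code_all_iff code_ex_iff
        msgs_c_enc_protocol[OF wf] Msg_def cert_trans_def cert_rel_holds_def cert_run_def)
next
  case (snoc a w)
  then have w: "w \<in> lists (Msg P x)" and a: "a \<in> Msg P x" by auto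
  have "cert_trans I x (cert_run I x (b # w)) a (cert_run I x (b # w @ [a]))"
    using cert_next_trans(1)[OF x cert_run_state[OF x, of "b # w"] a] w b by (simp add: cert_run_def)
  moreover have "cert_trans I x (cert_run I x w) a (cert_run I x (w @ [a]))"
    using cert_next_trans(1)[OF x cert_run_state[OF x w] a] by (simp add: cert_run_def)
  moreover have "rel_closed (enc_protocol P) I" using inv by (simp add: invariant_cert_def)
  ultimately show ?case
    using snoc.IH[OF w] a x
    by (fastforce simp: rel_closed_def code_all_iff code_ex_iff msgs_c_enc_protocol[OF wf] Msg_def
        cert_trans_def cert_rel_holds_def)
qed

lemma cert_covers_init: "cert_covers P I (S0 P) (C0 P)"
proof -
  have "good_init_ok (enc_protocol P) I" using inv by (simp add: invariant_cert_def)
  then obtain G where G: "G \<in> set (list_decode (cert_good I))" "code_length (G !# 0) = nnodes P"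
    "\<forall>j<nnodes P. G !# 0 !# j = init_st P j" "\<forall>x<nedges P. G !# 1 !# x = cert_init I x"
    unfolding good_init_ok_def code_ex_iff by auto
  have "G !# 0 = list_encode (S0 P)"
    by (rule code_eq_list_encode) (use G in \<open>simp_all add: S0_def\<close>)
  with G show ?thesis unfolding cert_covers_def by (auto simp: cert_run_def C0_def)
qed

lemma cert_covers_send:
  assumes cov: "cert_covers P I S C" and gs: "global_state P S C"
    and i: "i < nnodes P" and x: "x < nedges P" and b: "b \<in> Msg P x" and tl: "tl_of P x = i"
    and tr: "(S ! i, Snd b, q) \<in> Trans P i"
  shows "cert_covers P I (S[i := q]) (C[x := C ! x @ [b]])"
proof -
  from cov obtain G where G: "G \<in> set (list_decode (cert_good I))" "G !# 0 = list_encode S"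
    "\<forall>y<nedges P. G !# 1 !# y = cert_run I y (C ! y)"
    unfolding cert_covers_def by blast
  have lS: "length S = nnodes P" and lC: "length C = nedges P" and cx: "C ! x \<in> lists (Msg P x)"
    using gs x by (auto simp: global_state_def composite_state_def channel_content_def)
  have "cert_trans I x (cert_run I x (C ! x)) b (cert_run I x (C ! x @ [b]))"
    using cert_next_trans(1)[OF x cert_run_state[OF x cx] b] by (simp add: cert_run_def)
  then obtain d where d: "d \<in> set (list_decode (cert_delta I x))" "d !# 0 = cert_run I x (C ! x)"
    "d !# 1 = b" "d !# 2 = cert_run I x (C ! x @ [b])"
    unfolding cert_trans_def by blast
  have e: "enc_trans (S ! i, Snd b, q) \<in> set (list_decode (trans_c (enc_protocol P) i))"
    using tr i by (simp add: trans_c_enc_protocol Trans_def)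
  have "good_send_closed (enc_protocol P) I" using inv by (simp add: invariant_cert_def)
  then obtain G' where G': "G' \<in> set (list_decode (cert_good I))" "update_code (G' !# 0) (G !# 0) i q"
    "update_prefix_code (G' !# 1) (G !# 1) (nedges P) x (d !# 2)"
  proof -
    assume send: "good_send_closed (enc_protocol P) I"
    have b': "b \<in> set (list_decode (msgs_c (enc_protocol P) x))"
      using b x by (simp add: msgs_c_enc_protocol[OF wf] Msg_def)
    have "\<exists>G'\<in>set (list_decode (cert_good I)). update_code (G' !# 0) (G !# 0) i q \<and>
        update_prefix_code (G' !# 1) (G !# 1) (nedges P) x (d !# 2)"
      using send[unfolded good_send_closed_def code_all_iff code_ex_iff, rule_format, OF G(1) _ _ _ b' e d(1)]
        i x tl d G(2,3) lS by simp
    then show ?thesis using that by blast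
  qed
  have "G' !# 0 = list_encode (S[i := q])"
    using G'(2) G(2) by (metis list_decode_inverse update_code_iff)
  moreover have "G' !# 1 !# y = cert_run I y (C[x := C ! x @ [b]] ! y)" if "y < nedges P" for y
    using G'(3) G(3) d(4) that lC by (auto simp: update_prefix_code_def)
  ultimately show ?thesis using G'(1) unfolding cert_covers_def by blast
qed

lemma cert_covers_recv:
  assumes cov: "cert_covers P I S C" and gs: "global_state P S C"
    and i: "i < nnodes P" and x: "x < nedges P" and b: "b \<in> Msg P x" and hd: "hd_of P x = i"
    and tr: "(S ! i, Rcv b, q) \<in> Trans P i" and cx: "C ! x = b # w"
  shows "cert_covers P I (S[i := q]) (C[x := w])"
proof -
  from cov obtain G where G: "G \<in> set (list_decode (cert_good I))" "G !# 0 = list_encode S"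
    "\<forall>y<nedges P. G !# 1 !# y = cert_run I y (C ! y)"
    unfolding cert_covers_def by blast
  have lS: "length S = nnodes P" and lC: "length C = nedges P" and w: "w \<in> lists (Msg P x)"
    using gs x cx by (auto simp: global_state_def composite_state_def channel_content_def dest: spec[of _ x])
  obtain r where r: "r \<in> set (list_decode (cert_rel I))" "r !# 0 = x" "r !# 1 = b"
    "r !# 2 = cert_run I x (b # w)" "r !# 3 = cert_run I x w"
    using cert_rel_holds_cert_run[OF x b w] unfolding cert_rel_holds_def by blast
  have e: "enc_trans (S ! i, Rcv b, q) \<in> set (list_decode (trans_c (enc_protocol P) i))"
    using tr i by (simp add: trans_c_enc_protocol Trans_def)
  have b': "b \<in> set (list_decode (msgs_c (enc_protocol P) x))"
    using b x by (simp add: msgs_c_enc_protocol[OF wf] Msg_def)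
  have "good_recv_closed (enc_protocol P) I" using inv by (simp add: invariant_cert_def)
  from this[unfolded good_recv_closed_def code_all_iff code_ex_iff, rule_format, OF G(1) _ _ _ b' e r(1)]
  obtain G' where G': "G' \<in> set (list_decode (cert_good I))" "update_code (G' !# 0) (G !# 0) i q"
    "update_prefix_code (G' !# 1) (G !# 1) (nedges P) x (r !# 3)"
    using i x hd r G(2,3) lS cx by auto
  have "G' !# 0 = list_encode (S[i := q])"
    using G'(2) G(2) by (metis list_decode_inverse update_code_iff)
  moreover have "G' !# 1 !# y = cert_run I y (C[x := w] ! y)" if "y < nedges P" for y
    using G'(3) G(3) r(5) that lC by (auto simp: update_prefix_code_def)
  ultimately show ?thesis using G'(1) unfolding cert_covers_def by blast
qed

lemma reachable_cert_covers:
  assumes "reachable P S C"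
  shows "cert_covers P I S C"
proof -
  have "cert_covers P I (fst g) (snd g)" if "(step P)\<^sup>*\<^sup>* (S0 P, C0 P) g" for g
    using that
  proof (induction rule: rtranclp_induct)
    case base
    then show ?case using cert_covers_init by simp
  next
    case (step g g')
    obtain S C S' C' where g: "g = (S, C)" and g': "g' = (S', C')" by fastforce
    have gs: "global_state P S C"
      using reachable_global_state[OF wf] step.hyps(1) g by (simp add: reachable_def)
    have cov: "cert_covers P I S C" using step.IH g by simp
    from step.hyps(2)[unfolded g g' step_def] obtain i q b x where
      i: "i < nnodes P" and x: "x < nedges P" and b: "b \<in> Msg P x" and
      cases: "(S ! i, Snd b, q) \<in> Trans P i \<and> tl_of P x = i \<and> S' = S[i := q] \<and> C' = C[x := C ! x @ [b]]
        \<or> (S ! i, Rcv b, q) \<in> Trans P i \<and> hd_of P x = i \<and> C ! x \<noteq> [] \<and> hd (C ! x) = b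
           \<and> S' = S[i := q] \<and> C' = C[x := tl (C ! x)]"
      by auto
    then show ?case
    proof (elim disjE conjE)
      assume "(S ! i, Snd b, q) \<in> Trans P i" "tl_of P x = i" "S' = S[i := q]" "C' = C[x := C ! x @ [b]]"
      with cert_covers_send[OF cov gs i x b] show ?case by (simp add: g')
    next
      assume "(S ! i, Rcv b, q) \<in> Trans P i" "hd_of P x = i" "C ! x \<noteq> []" "hd (C ! x) = b"
        "S' = S[i := q]" "C' = C[x := tl (C ! x)]"
      with cert_covers_recv[OF cov gs i x b, of q "tl (C ! x)"] show ?case
        by (simp add: g') (metis list.collapse)
    qed
  qed
  from this[of "(S, C)"] assms show ?thesis by (simp add: reachable_def)
qed

end

text \<open>The runs \<open>rn !# x\<close> of the DFAs on the channel contents \<open>cc !# x\<close> are part of the witness,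
  so that checking them only needs bounded quantifiers.\<close>

definition run_cert :: "nat \<Rightarrow> nat \<Rightarrow> nat \<Rightarrow> nat \<Rightarrow> bool" where
  "run_cert pc I rn cc \<longleftrightarrow> (\<forall>x<nedges_c pc. rn !# x !# 0 = cert_init I x \<and>
     (\<forall>k<code_length (cc !# x). code_ex (cert_delta I x) (\<lambda>d.
        d !# 0 = rn !# x !# k \<and> d !# 1 = cc !# x !# k \<and> d !# 2 = rn !# x !# Suc k)))"

definition unreach_cert :: "nat \<Rightarrow> nat \<Rightarrow> nat \<Rightarrow> nat \<Rightarrow> bool" where
  "unreach_cert pc sc cc w \<longleftrightarrow> invariant_cert pc (w !# 0) \<and> run_cert pc (w !# 0) (w !# 1) cc \<and>
     \<not> code_ex (cert_good (w !# 0)) (\<lambda>G. G !# 0 = sc \<and>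
         (\<forall>x<nedges_c pc. G !# 1 !# x = w !# 1 !# x !# code_length (cc !# x)))"

definition is_send_code :: "nat \<Rightarrow> bool" where "is_send_code a \<longleftrightarrow> (\<exists>c<Suc a. a = 2 * c)"

definition deadlock_free_cert :: "nat \<Rightarrow> nat \<Rightarrow> bool" where
  "deadlock_free_cert pc I \<longleftrightarrow> invariant_cert pc I \<and> code_all (cert_good I) (\<lambda>G.
     code_length (G !# 0) = nnodes_c pc \<and> (\<forall>x<nedges_c pc. G !# 1 !# x = cert_init I x) \<longrightarrow>
     (\<exists>j<nnodes_c pc. code_ex (trans_c pc j) (\<lambda>e. e !# 0 = G !# 0 !# j \<and> is_send_code (e !# 1))))"

lemma is_send_code_enc_act [simp]: "is_send_code (enc_act a) \<longleftrightarrow> (\<exists>b. a = Snd b)"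
  by (cases a; auto simp: is_send_code_def; presburger)

lemma run_cert_cert_run:
  assumes wf: "wf_protocol P" and inv: "invariant_cert (enc_protocol P) I"
    and run: "run_cert (enc_protocol P) I rn (list_encode (map list_encode C))"
    and cc: "channel_content P C" and x: "x < nedges P"
  shows "rn !# x !# length (C ! x) = cert_run I x (C ! x)"
proof -
  let ?w = "C ! x"
  have lC: "length C = nedges P" and w: "?w \<in> lists (Msg P x)"
    using cc x by (auto simp: channel_content_def)
  have "rn !# x !# k = cert_run I x (take k ?w)" if "k \<le> length ?w" for k
    using that
  proof (induction k)
    case 0
    then show ?case using run x lC by (simp add: run_cert_def cert_run_def)
  next
    case (Suc k)
    have tk: "take k ?w \<in> lists (Msg P x)" using w by (meson in_listsD in_listsI in_set_takeD)
    have a: "?w ! k \<in> Msg P x" using w Suc.prems by (simp add: in_lists_conv_set)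
    have "cert_trans I x (rn !# x !# k) (?w ! k) (rn !# x !# Suc k)"
      using run x lC Suc.prems by (auto simp: run_cert_def cert_trans_def code_ex_iff)
    moreover have "cert_trans I x (rn !# x !# k) (?w ! k) (cert_run I x (take (Suc k) ?w))"
      using cert_next_trans(1)[OF wf inv x cert_run_state[OF wf inv x tk] a] Suc
      by (simp add: cert_run_def take_Suc_conv_app_nth)
    ultimately show ?case using dfa_ok_cert(3)[OF wf inv x] by blast
  qed
  from this[of "length ?w"] show ?thesis by simp
qed

lemma unreach_cert_sound:
  assumes wf: "wf_protocol P" and cc: "channel_content P C"
    and u: "unreach_cert (enc_protocol P) (list_encode S) (list_encode (map list_encode C)) w"
  shows "\<not> reachable P S C"
proof
  assume "reachable P S C"
  have inv: "invariant_cert (enc_protocol P) (w !# 0)"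
    and run: "run_cert (enc_protocol P) (w !# 0) (w !# 1) (list_encode (map list_encode C))"
    using u by (auto simp: unreach_cert_def)
  have lC: "length C = nedges P" using cc by (simp add: channel_content_def)
  from reachable_cert_covers[OF wf inv \<open>reachable P S C\<close>] u lC
  show False
    using run_cert_cert_run[OF wf inv run cc]
    by (auto simp: cert_covers_def unreach_cert_def code_ex_iff)
qed

lemma deadlock_free_cert_sound:
  assumes wf: "wf_protocol P" and cert: "deadlock_free_cert (enc_protocol P) I"
  shows "deadlock_free P"
  unfolding deadlock_free_def
proof (intro notI, elim exE conjE)
  fix S C assume r: "reachable P S C" and d: "deadlocked P S C"
  have inv: "invariant_cert (enc_protocol P) I" using cert by (simp add: deadlock_free_cert_def)
  have lS: "length S = nnodes P" using reachable_lengths[OF wf r] by simp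
  from reachable_cert_covers[OF wf inv r] obtain G where G: "G \<in> set (list_decode (cert_good I))"
    "G !# 0 = list_encode S" "\<forall>x<nedges P. G !# 1 !# x = cert_init I x"
    using d by (auto simp: cert_covers_def deadlocked_def C0_def cert_run_def)
  then obtain j t b where "j < nnodes P" "t \<in> Trans P j" "fst t = S ! j" "fst (snd t) = Snd b"
    using cert lS by (fastforce simp: deadlock_free_cert_def code_all_iff)
  then have "j < nnodes P" "(S ! j, Snd b, snd (snd t)) \<in> Trans P j" by (metis prod.collapse)+
  then show False using d by (auto simp: deadlocked_def receive_state_def)
qed

section \<open>Certificates exist under the recognizable channel property\<close>

lemma regular_lang_finite_quotients:
  assumes "regular_lang M"
  shows "finite (range (\<lambda>w. {u. w @ u \<in> M}))"
proof -
  obtain Q :: "nat set" and \<delta> q0 F where Q: "finite Q" "q0 \<in> Q" "\<forall>q\<in>Q. \<forall>a. \<delta> q a \<in> Q"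
    and M: "M = {w. foldl \<delta> q0 w \<in> F}"
    using assms unfolding regular_lang_def by blast
  have foldl_Q: "q \<in> Q \<Longrightarrow> foldl \<delta> q w \<in> Q" for q w
    by (induction w arbitrary: q) (use Q(3) in auto)
  have "range (\<lambda>w. {u. w @ u \<in> M}) \<subseteq> (\<lambda>q. {u. foldl \<delta> q u \<in> F}) ` Q"
    using foldl_Q[OF Q(2)] by (auto simp: M)
  then show ?thesis using Q(1) finite_surj by blast
qed

lemma finite_composite_states: "finite {S. composite_state P S}"
proof -
  have "{S. composite_state P S} \<subseteq> {S. set S \<subseteq> (\<Union>j<nnodes P. Kst P j) \<and> length S = nnodes P}"
    by (auto simp: composite_state_def in_set_conv_nth) (use lessThan_iff in blast)
  moreover have "finite (\<Union>j<nnodes P. Kst P j)" by (simp add: Kst_def)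
  ultimately show ?thesis using finite_lists_length_eq finite_subset by blast
qed

definition rcp_decomposition :: "protocol \<Rightarrow> nat list \<Rightarrow> nat list set list set \<Rightarrow> bool" where
  "rcp_decomposition P S F \<longleftrightarrow> finite F
     \<and> (\<forall>Ls\<in>F. length Ls = nedges P \<and> (\<forall>x<nedges P. Ls ! x \<subseteq> lists (Msg P x) \<and> regular_lang (Ls ! x)))
     \<and> Lset P S = (\<Union>Ls\<in>F. prod_lang Ls)"

definition rcp_family :: "protocol \<Rightarrow> nat list \<Rightarrow> nat list set list set" where
  "rcp_family P S = (SOME F. rcp_decomposition P S F)"

definition channel_langs :: "protocol \<Rightarrow> nat \<Rightarrow> nat list set set" where
  "channel_langs P x = {Ls ! x | S Ls. composite_state P S \<and> Ls \<in> rcp_family P S}"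

definition channel_lang_list :: "protocol \<Rightarrow> nat \<Rightarrow> nat list set list" where
  "channel_lang_list P x = (SOME l. set l = channel_langs P x)"

text \<open>Two contents \<open>w\<close>, \<open>w'\<close> of channel \<open>x\<close> get the same \<open>nerode_class\<close> iff they have the same
  residuals \<open>{u. w @ u \<in> M}\<close> for all the finitely many languages \<open>M\<close> that occur in the
  decompositions of the reachable sets; this is a right congruence of finite index.\<close>

definition residuals :: "protocol \<Rightarrow> nat \<Rightarrow> nat list \<Rightarrow> nat list set list" where
  "residuals P x w = map (\<lambda>M. {u. w @ u \<in> M}) (channel_lang_list P x)"

definition residual_index :: "protocol \<Rightarrow> nat \<Rightarrow> nat list set list \<Rightarrow> nat" where
  "residual_index P x = (SOME f. inj_on f (range (residuals P x)))"

definition nerode_class :: "protocol \<Rightarrow> nat \<Rightarrow> nat list \<Rightarrow> nat" where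
  "nerode_class P x w = residual_index P x (residuals P x w)"

lemma residuals_append: "residuals P x w = residuals P x w' \<Longrightarrow> residuals P x (w @ v) = residuals P x (w' @ v)"
proof -
  assume eq: "residuals P x w = residuals P x w'"
  have "{u. w @ u \<in> M} = {u. w' @ u \<in> M}" if "M \<in> set (channel_lang_list P x)" for M
    using eq that unfolding residuals_def by (simp add: map_eq_conv)
  then have "{u. w @ v @ u \<in> M} = {u. w' @ v @ u \<in> M}" if "M \<in> set (channel_lang_list P x)" for M
    using that by blast
  then show ?thesis unfolding residuals_def by (simp add: map_eq_conv)
qed

context
  fixes P :: protocol
  assumes rcp: "recognizable_channel_property P"
begin

lemma rcp_family_decomposition: "composite_state P S \<Longrightarrow> rcp_decomposition P S (rcp_family P S)"
  unfolding rcp_family_def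
  by (rule someI_ex) (use rcp in \<open>auto simp: recognizable_channel_property_def rcp_decomposition_def\<close>)

lemma set_channel_lang_list: "set (channel_lang_list P x) = channel_langs P x"
proof -
  have "channel_langs P x = (\<Union>S\<in>{S. composite_state P S}. (\<lambda>Ls. Ls ! x) ` rcp_family P S)"
    unfolding channel_langs_def by blast
  moreover have "finite (rcp_family P S)" if "composite_state P S" for S
    using rcp_family_decomposition[OF that] by (simp add: rcp_decomposition_def)
  ultimately have "finite (channel_langs P x)" using finite_composite_states by simp
  then show ?thesis unfolding channel_lang_list_def by (rule someI_ex[OF finite_list])
qed

lemma finite_residuals: "x < nedges P \<Longrightarrow> finite (range (residuals P x))"
proof -
  assume x: "x < nedges P"
  let ?A = "\<Union>M\<in>set (channel_lang_list P x). range (\<lambda>w. {u. w @ u \<in> M})"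
  have "regular_lang M" if "M \<in> set (channel_lang_list P x)" for M
    using that x rcp_family_decomposition
    unfolding set_channel_lang_list channel_langs_def rcp_decomposition_def by auto
  then have "finite ?A" by (simp add: regular_lang_finite_quotients)
  moreover have "range (residuals P x) \<subseteq> {l. set l \<subseteq> ?A \<and> length l = length (channel_lang_list P x)}"
    unfolding residuals_def by auto blast
  ultimately show ?thesis by (rule finite_subset[OF _ finite_lists_length_eq, rotated])
qed

lemma nerode_class_eq_iff:
  "x < nedges P \<Longrightarrow> nerode_class P x w = nerode_class P x w' \<longleftrightarrow> residuals P x w = residuals P x w'"
proof -
  assume x: "x < nedges P"
  obtain f :: "nat list set list \<Rightarrow> nat" where "inj_on f (range (residuals P x))"
    using finite_imp_inj_to_nat_seg[OF finite_residuals[OF x]] by blast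
  then have "inj_on (residual_index P x) (range (residuals P x))"
    unfolding residual_index_def by (rule someI[of "\<lambda>f. inj_on f (range (residuals P x))"])
  then show ?thesis unfolding nerode_class_def by (metis inj_on_eq_iff rangeI)
qed

lemma nerode_class_append:
  "x < nedges P \<Longrightarrow> nerode_class P x w = nerode_class P x w' \<Longrightarrow> nerode_class P x (w @ v) = nerode_class P x (w' @ v)"
  using nerode_class_eq_iff residuals_append by blast

lemma reachable_nerode_saturated:
  assumes wf: "wf_protocol P" and r: "reachable P S C" and l: "length C' = nedges P"
    and eq: "\<And>x. x < nedges P \<Longrightarrow> nerode_class P x (C' ! x) = nerode_class P x (C ! x)"
  shows "reachable P S C'"
proof -
  have cs: "composite_state P S" using reachable_global_state[OF wf r] by (simp add: global_state_def)
  note dec = rcp_family_decomposition[OF cs, unfolded rcp_decomposition_def]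
  have "C \<in> Lset P S" using r by (simp add: Lset_def)
  then obtain Ls where Ls: "Ls \<in> rcp_family P S" "C \<in> prod_lang Ls" using dec by auto
  have lLs: "length Ls = nedges P" using dec Ls(1) by simp
  have "C' ! x \<in> Ls ! x" if x: "x < length Ls" for x
  proof -
    have "Ls ! x \<in> set (channel_lang_list P x)"
      using Ls(1) cs unfolding set_channel_lang_list channel_langs_def by blast
    moreover have "residuals P x (C' ! x) = residuals P x (C ! x)"
      using eq[of x] x lLs nerode_class_eq_iff by simp
    ultimately have "{u. C' ! x @ u \<in> Ls ! x} = {u. C ! x @ u \<in> Ls ! x}"
      unfolding residuals_def by (simp add: map_eq_conv)
    moreover have "C ! x \<in> Ls ! x" using Ls(2) x by (simp add: prod_lang_def)
    ultimately show ?thesis by (metis (mono_tags, lifting) append.right_neutral mem_Collect_eq)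
  qed
  then have "C' \<in> prod_lang Ls" using l lLs by (simp add: prod_lang_def)
  then show ?thesis using dec Ls(1) by (auto simp: Lset_def)
qed

end

definition nerode_classes :: "protocol \<Rightarrow> nat \<Rightarrow> nat set" where
  "nerode_classes P x = range (nerode_class P x)"

definition class_delta :: "protocol \<Rightarrow> nat \<Rightarrow> nat \<Rightarrow> nat \<Rightarrow> nat" where
  "class_delta P x q a = nerode_class P x ((SOME w. nerode_class P x w = q) @ [a])"

definition class_delta_table :: "protocol \<Rightarrow> nat \<Rightarrow> nat list" where
  "class_delta_table P x = concat (map (\<lambda>q. map (\<lambda>a. list_encode [q, a, class_delta P x q a]) (p_msgs P ! x))
     (sorted_list_of_set (nerode_classes P x)))"

definition class_vector :: "protocol \<Rightarrow> nat list list \<Rightarrow> nat list" where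
  "class_vector P C = map (\<lambda>x. nerode_class P x (C ! x)) [0..<nedges P]"

definition abstract_reachable :: "protocol \<Rightarrow> nat set" where
  "abstract_reachable P = {list_encode [list_encode S, list_encode (class_vector P C)] | S C. reachable P S C}"

definition head_removal_rel :: "protocol \<Rightarrow> nat set" where
  "head_removal_rel P = {list_encode [x, b, nerode_class P x (b # w), nerode_class P x w] | x b w.
     x < nedges P \<and> b \<in> Msg P x}"

definition canonical_cert :: "protocol \<Rightarrow> nat" where
  "canonical_cert P = list_encode
     [list_encode (map (\<lambda>x. list_encode [list_encode (sorted_list_of_set (nerode_classes P x)),
        nerode_class P x [], list_encode (class_delta_table P x)]) [0..<nedges P]),
      list_encode (sorted_list_of_set (abstract_reachable P)),
      list_encode (sorted_list_of_set (head_removal_rel P))]"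

definition nerode_runs :: "protocol \<Rightarrow> nat list list \<Rightarrow> nat" where
  "nerode_runs P C = list_encode (map (\<lambda>x. list_encode (map (\<lambda>k. nerode_class P x (take k (C ! x)))
     [0..<Suc (length (C ! x))])) [0..<nedges P])"

lemma nerode_runs_code_nth:
  assumes "x < nedges P" "k \<le> length (C ! x)"
  shows "nerode_runs P C !# x !# k = nerode_class P x (take k (C ! x))"
proof -
  let ?run = "map (\<lambda>k. nerode_class P x (take k (C ! x))) [0..<Suc (length (C ! x))]"
  have "k < length ?run" using assms(2) by simp
  then have "nerode_runs P C !# x !# k = ?run ! k" using assms(1) by (simp add: nerode_runs_def)
  also have "\<dots> = nerode_class P x (take k (C ! x))" using assms(2) by (simp only: nth_map_upt) simp
  finally show ?thesis .
qed

lemma class_vector_code_nth [simp]: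
  "x < nedges P \<Longrightarrow> list_encode (class_vector P C) !# x = nerode_class P x (C ! x)"
  by (simp add: class_vector_def)

context
  fixes P :: protocol
  assumes wf: "wf_protocol P" and rcp: "recognizable_channel_property P"
begin

lemma finite_nerode_classes: "x < nedges P \<Longrightarrow> finite (nerode_classes P x)"
proof -
  assume x: "x < nedges P"
  have "nerode_classes P x = residual_index P x ` range (residuals P x)"
    unfolding nerode_classes_def nerode_class_def by auto
  then show ?thesis using finite_residuals[OF rcp x] by simp
qed

lemma class_delta_nerode_class:
  "x < nedges P \<Longrightarrow> class_delta P x (nerode_class P x w) a = nerode_class P x (w @ [a])"
  unfolding class_delta_def
  by (rule nerode_class_append[OF rcp]) (auto intro: someI[of "\<lambda>w'. nerode_class P x w' = nerode_class P x w"])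

lemma set_class_delta_table:
  "x < nedges P \<Longrightarrow>
    set (class_delta_table P x) = {list_encode [nerode_class P x w, a, nerode_class P x (w @ [a])] | w a. a \<in> Msg P x}"
proof (intro set_eqI iffI)
  fix d assume x: "x < nedges P" and "d \<in> set (class_delta_table P x)"
  then obtain q a where "q \<in> nerode_classes P x" "a \<in> Msg P x" "d = list_encode [q, a, class_delta P x q a]"
    by (auto simp: class_delta_table_def finite_nerode_classes Msg_def)
  moreover from this(1) obtain w where "q = nerode_class P x w" unfolding nerode_classes_def by blast
  ultimately show "d \<in> {list_encode [nerode_class P x w, a, nerode_class P x (w @ [a])] | w a. a \<in> Msg P x}"
    using x by (auto simp only: class_delta_nerode_class mem_Collect_eq)
next
  fix d assume x: "x < nedges P"
    and "d \<in> {list_encode [nerode_class P x w, a, nerode_class P x (w @ [a])] | w a. a \<in> Msg P x}"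
  then obtain w a where "a \<in> Msg P x" "d = list_encode [nerode_class P x w, a, class_delta P x (nerode_class P x w) a]"
    by (auto simp: class_delta_nerode_class)
  moreover have "nerode_class P x w \<in> nerode_classes P x" by (simp add: nerode_classes_def)
  ultimately show "d \<in> set (class_delta_table P x)"
    using x by (auto simp: class_delta_table_def finite_nerode_classes Msg_def)
qed

lemma finite_abstract_reachable: "finite (abstract_reachable P)"
proof -
  let ?V = "{v. set v \<subseteq> (\<Union>x<nedges P. nerode_classes P x) \<and> length v = nedges P}"
  have "abstract_reachable P \<subseteq>
      (\<lambda>(S, v). list_encode [list_encode S, list_encode v]) ` ({S. composite_state P S} \<times> ?V)"
    using reachable_global_state[OF wf]
    by (fastforce simp: abstract_reachable_def global_state_def class_vector_def nerode_classes_def)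
  moreover have "finite ?V"
    by (rule finite_lists_length_eq) (simp add: finite_nerode_classes)
  ultimately show ?thesis
    using finite_composite_states by (meson finite_SigmaI finite_imageI finite_subset)
qed

lemma finite_head_removal_rel: "finite (head_removal_rel P)"
proof -
  let ?Q = "\<Union>x<nedges P. nerode_classes P x" and ?M = "\<Union>x<nedges P. Msg P x"
  have "head_removal_rel P \<subseteq> (\<lambda>(x, b, p, q). list_encode [x, b, p, q]) ` ({..<nedges P} \<times> ?M \<times> ?Q \<times> ?Q)"
  proof
    fix r assume "r \<in> head_removal_rel P"
    then obtain x b w where "x < nedges P" "b \<in> Msg P x"
      and r: "r = list_encode [x, b, nerode_class P x (b # w), nerode_class P x w]"
      unfolding head_removal_rel_def by blast
    then show "r \<in> (\<lambda>(x, b, p, q). list_encode [x, b, p, q]) ` ({..<nedges P} \<times> ?M \<times> ?Q \<times> ?Q)"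
      by (intro image_eqI[of _ _ "(x, b, nerode_class P x (b # w), nerode_class P x w)"])
        (auto simp: nerode_classes_def)
  qed
  moreover have "finite ({..<nedges P} \<times> ?M \<times> ?Q \<times> ?Q)"
    by (simp add: finite_nerode_classes Msg_def)
  ultimately show ?thesis by (meson finite_imageI finite_subset)
qed

lemma canonical_cert_simps:
  assumes "x < nedges P"
  shows "set (list_decode (cert_states (canonical_cert P) x)) = nerode_classes P x"
    and "cert_init (canonical_cert P) x = nerode_class P x []"
    and "set (list_decode (cert_delta (canonical_cert P) x)) =
      {list_encode [nerode_class P x w, a, nerode_class P x (w @ [a])] | w a. a \<in> Msg P x}"
  using assms
  by (simp_all add: cert_accessor_defs canonical_cert_def finite_nerode_classes set_class_delta_table)

lemma canonical_cert_good_rel [simp]: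
  "set (list_decode (cert_good (canonical_cert P))) = abstract_reachable P"
  "set (list_decode (cert_rel (canonical_cert P))) = head_removal_rel P"
  by (simp_all add: cert_accessor_defs canonical_cert_def finite_abstract_reachable finite_head_removal_rel)

end

context
  fixes P :: protocol
  assumes wf: "wf_protocol P" and rcp: "recognizable_channel_property P"
begin

lemma canonical_dfa_ok:
  assumes x: "x < nedges P"
  shows "dfa_ok (enc_protocol P) (canonical_cert P) x"
proof -
  note simps = canonical_cert_simps[OF wf rcp x]
  let ?I = "canonical_cert P"
  have "code_ex (cert_states ?I x) (\<lambda>q. q = cert_init ?I x)"
    unfolding code_ex_iff simps by (simp add: nerode_classes_def)
  moreover have "\<exists>d\<in>set (list_decode (cert_delta ?I x)). d !# 0 = q \<and> d !# 1 = a \<and>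
      (\<exists>q'\<in>set (list_decode (cert_states ?I x)). q' = d !# 2)"
    if q: "q \<in> set (list_decode (cert_states ?I x))" and a: "a \<in> Msg P x" for q a
  proof -
    obtain w where "q = nerode_class P x w" using q unfolding simps nerode_classes_def by blast
    with a show ?thesis unfolding simps
      by (intro bexI[of _ "list_encode [nerode_class P x w, a, nerode_class P x (w @ [a])]"])
        (auto simp: nerode_classes_def)
  qed
  then have "code_all (cert_states ?I x) (\<lambda>q. code_all (msgs_c (enc_protocol P) x) (\<lambda>a.
      code_ex (cert_delta ?I x) (\<lambda>d. d !# 0 = q \<and> d !# 1 = a \<and> code_ex (cert_states ?I x) (\<lambda>q'. q' = d !# 2))))"
    unfolding code_all_iff code_ex_iff set_list_decode_msgs_c[OF wf x] by blast
  moreover have "d1 !# 2 = d2 !# 2"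
    if d: "d1 \<in> set (list_decode (cert_delta ?I x))" "d2 \<in> set (list_decode (cert_delta ?I x))"
      and eq: "d1 !# 0 = d2 !# 0" "d1 !# 1 = d2 !# 1" for d1 d2
  proof -
    obtain w1 a1 w2 a2 where d1: "d1 = list_encode [nerode_class P x w1, a1, nerode_class P x (w1 @ [a1])]"
      and d2: "d2 = list_encode [nerode_class P x w2, a2, nerode_class P x (w2 @ [a2])]"
      using d unfolding simps by blast
    have w: "nerode_class P x w1 = nerode_class P x w2" and a: "a1 = a2" using eq by (simp_all add: d1 d2)
    from nerode_class_append[OF rcp x w] show ?thesis by (simp add: d1 d2 a)
  qed
  then have "code_all (cert_delta ?I x) (\<lambda>d1. code_all (cert_delta ?I x) (\<lambda>d2.
      d1 !# 0 = d2 !# 0 \<and> d1 !# 1 = d2 !# 1 \<longrightarrow> d1 !# 2 = d2 !# 2))"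
    unfolding code_all_iff by blast
  ultimately show ?thesis unfolding dfa_ok_def by blast
qed

lemma abstract_reachableE:
  assumes "G \<in> abstract_reachable P"
  obtains S C where "reachable P S C" "length S = nnodes P" "length C = nedges P"
    "G = list_encode [list_encode S, list_encode (class_vector P C)]"
  using assms reachable_lengths[OF wf] unfolding abstract_reachable_def by blast

lemma abstract_reachableI:
  "reachable P S C \<Longrightarrow> list_encode [list_encode S, list_encode (class_vector P C)] \<in> abstract_reachable P"
  unfolding abstract_reachable_def by blast

lemma canonical_good_init_ok: "good_init_ok (enc_protocol P) (canonical_cert P)"
proof -
  have "reachable P (S0 P) (C0 P)" by (simp add: reachable_def)
  from abstract_reachableI[OF this] show ?thesis
    unfolding good_init_ok_def code_ex_iff canonical_cert_good_rel[OF wf rcp]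
    by (intro bexI[of _ "list_encode [list_encode (S0 P), list_encode (class_vector P (C0 P))]"])
      (simp_all add: S0_def C0_def canonical_cert_simps[OF wf rcp])
qed

lemma canonical_good_send_closed: "good_send_closed (enc_protocol P) (canonical_cert P)"
  unfolding good_send_closed_def code_all_iff code_ex_iff canonical_cert_good_rel[OF wf rcp]
    nedges_c_enc_protocol nnodes_c_enc_protocol
proof (intro ballI allI impI)
  fix G i x b e d
  assume G: "G \<in> abstract_reachable P" and i: "i < nnodes P" and x: "x < nedges P"
    and tl: "tl_of_c (enc_protocol P) x = i" and b: "b \<in> set (list_decode (msgs_c (enc_protocol P) x))"
    and e: "e \<in> set (list_decode (trans_c (enc_protocol P) i))"
    and d: "d \<in> set (list_decode (cert_delta (canonical_cert P) x))"
    and c: "e !# 0 = G !# 0 !# i \<and> e !# 1 = 2 * b \<and> d !# 0 = G !# 1 !# x \<and> d !# 1 = b"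
  from G obtain S C where r: "reachable P S C" and lS: "length S = nnodes P" and lC: "length C = nedges P"
    and G: "G = list_encode [list_encode S, list_encode (class_vector P C)]"
    by (rule abstract_reachableE)
  from e i obtain t where t: "t \<in> Trans P i" "e = enc_trans t"
    by (auto simp: set_list_decode_trans_c)
  from d x obtain w a where d: "d = list_encode [nerode_class P x w, a, nerode_class P x (w @ [a])]"
    unfolding canonical_cert_simps[OF wf rcp x] by blast
  obtain q where tr: "(S ! i, Snd b, q) \<in> Trans P i" and q: "e !# 2 = q"
    using t c i lS by (cases t) (auto simp: G)
  have w: "nerode_class P x w = nerode_class P x (C ! x)" and a: "a = b"
    using c x lC by (simp_all add: G d)
  have "step P (S, C) (S[i := q], C[x := C ! x @ [b]])"
    using i x b tl tr by (intro step_send) (simp_all add: set_list_decode_msgs_c[OF wf x])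
  with r have "reachable P (S[i := q]) (C[x := C ! x @ [b]])" by (rule reachable_step)
  moreover have "nerode_class P x (C ! x @ [b]) = d !# 2"
    using nerode_class_append[OF rcp x w[symmetric]] by (simp add: d a)
  ultimately show "\<exists>G'\<in>abstract_reachable P. update_code (G' !# 0) (G !# 0) i (e !# 2) \<and>
      update_prefix_code (G' !# 1) (G !# 1) (nedges P) x (d !# 2)"
    using lC x
    by (intro bexI[OF _ abstract_reachableI])
      (auto simp: G q update_code_iff update_prefix_code_def nth_list_update)
qed

lemma canonical_good_recv_closed: "good_recv_closed (enc_protocol P) (canonical_cert P)"
  unfolding good_recv_closed_def code_all_iff code_ex_iff canonical_cert_good_rel[OF wf rcp]
    nedges_c_enc_protocol nnodes_c_enc_protocol
proof (intro ballI allI impI)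
  fix G i x b e r
  assume G: "G \<in> abstract_reachable P" and i: "i < nnodes P" and x: "x < nedges P"
    and hd: "hd_of_c (enc_protocol P) x = i" and b: "b \<in> set (list_decode (msgs_c (enc_protocol P) x))"
    and e: "e \<in> set (list_decode (trans_c (enc_protocol P) i))" and r: "r \<in> head_removal_rel P"
    and c: "e !# 0 = G !# 0 !# i \<and> e !# 1 = 2 * b + 1 \<and> r !# 0 = x \<and> r !# 1 = b \<and> r !# 2 = G !# 1 !# x"
  from G obtain S C where reach: "reachable P S C" and lS: "length S = nnodes P" and lC: "length C = nedges P"
    and G: "G = list_encode [list_encode S, list_encode (class_vector P C)]"
    by (rule abstract_reachableE)
  from e i obtain t where t: "t \<in> Trans P i" "e = enc_trans t"
    by (auto simp: set_list_decode_trans_c)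
  from r obtain x' b' w where r: "r = list_encode [x', b', nerode_class P x' (b' # w), nerode_class P x' w]"
    unfolding head_removal_rel_def by blast
  with c have "x' = x" "b' = b" by simp_all
  with r have r: "r = list_encode [x, b, nerode_class P x (b # w), nerode_class P x w]" by simp
  obtain q where tr: "(S ! i, Rcv b, q) \<in> Trans P i" and q: "e !# 2 = q"
    using t c i lS by (cases t) (auto simp: G)
  have "nerode_class P x (b # w) = nerode_class P x (C ! x)"
    using c x lC by (simp add: G r)
  then have "reachable P S (C[x := b # w])"
    using lC x by (intro reachable_nerode_saturated[OF rcp wf reach]) (auto simp: nth_list_update)
  moreover have "step P (S, C[x := b # w]) (S[i := q], C[x := w])"
    using step_recv[of i P x b S q "C[x := b # w]" w] i x b hd tr lC
    by (simp add: set_list_decode_msgs_c[OF wf x])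
  ultimately have "reachable P (S[i := q]) (C[x := w])" by (rule reachable_step)
  then show "\<exists>G'\<in>abstract_reachable P. update_code (G' !# 0) (G !# 0) i (e !# 2) \<and>
      update_prefix_code (G' !# 1) (G !# 1) (nedges P) x (r !# 3)"
    using lC x
    by (intro bexI[OF _ abstract_reachableI])
      (auto simp: G q r update_code_iff update_prefix_code_def nth_list_update)
qed

lemma head_removal_relI:
  "x < nedges P \<Longrightarrow> b \<in> Msg P x \<Longrightarrow>
    list_encode [x, b, nerode_class P x (b # w), nerode_class P x w] \<in> head_removal_rel P"
  unfolding head_removal_rel_def by blast

lemma canonical_rel_init_ok: "rel_init_ok (enc_protocol P) (canonical_cert P)"
  unfolding rel_init_ok_def code_all_iff code_ex_iff canonical_cert_good_rel[OF wf rcp] nedges_c_enc_protocol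
proof (intro allI impI ballI)
  fix x b d
  assume x: "x < nedges P" and b: "b \<in> set (list_decode (msgs_c (enc_protocol P) x))"
    and d: "d \<in> set (list_decode (cert_delta (canonical_cert P) x))"
    and c: "d !# 0 = cert_init (canonical_cert P) x \<and> d !# 1 = b"
  from d x obtain w a where d: "d = list_encode [nerode_class P x w, a, nerode_class P x (w @ [a])]"
    unfolding canonical_cert_simps[OF wf rcp x] by blast
  have w: "nerode_class P x w = nerode_class P x []" and a: "a = b"
    using c x by (simp_all add: d canonical_cert_simps[OF wf rcp x])
  have "d !# 2 = nerode_class P x [b]"
    using nerode_class_append[OF rcp x w, of "[b]"] by (simp add: d a)
  with x b show "\<exists>r\<in>head_removal_rel P.
      r !# 0 = x \<and> r !# 1 = b \<and> r !# 2 = d !# 2 \<and> r !# 3 = cert_init (canonical_cert P) x"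
    by (intro bexI[OF _ head_removal_relI[of x b "[]"]])
      (simp_all add: canonical_cert_simps[OF wf rcp x] set_list_decode_msgs_c[OF wf x])
qed

lemma canonical_rel_closed: "rel_closed (enc_protocol P) (canonical_cert P)"
  unfolding rel_closed_def code_all_iff code_ex_iff canonical_cert_good_rel[OF wf rcp] nedges_c_enc_protocol
proof (intro allI impI ballI)
  fix r a d1 d2
  assume r: "r \<in> head_removal_rel P" and "r !# 0 < nedges P"
    and a: "a \<in> set (list_decode (msgs_c (enc_protocol P) (r !# 0)))"
    and d1: "d1 \<in> set (list_decode (cert_delta (canonical_cert P) (r !# 0)))"
    and d2: "d2 \<in> set (list_decode (cert_delta (canonical_cert P) (r !# 0)))"
    and c: "d1 !# 0 = r !# 2 \<and> d1 !# 1 = a \<and> d2 !# 0 = r !# 3 \<and> d2 !# 1 = a"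
  from r obtain x b w where x: "x < nedges P" and b: "b \<in> Msg P x"
    and r: "r = list_encode [x, b, nerode_class P x (b # w), nerode_class P x w]"
    unfolding head_removal_rel_def by blast
  have r0: "r !# 0 = x" by (simp add: r)
  obtain w1 a1 w2 a2 where d1: "d1 = list_encode [nerode_class P x w1, a1, nerode_class P x (w1 @ [a1])]"
    and d2: "d2 = list_encode [nerode_class P x w2, a2, nerode_class P x (w2 @ [a2])]"
    using d1 d2 unfolding r0 canonical_cert_simps[OF wf rcp x] by blast
  have w1: "nerode_class P x w1 = nerode_class P x (b # w)" and w2: "nerode_class P x w2 = nerode_class P x w"
    and a1: "a1 = a" and a2: "a2 = a"
    using c by (simp_all add: d1 d2 r)
  have "d1 !# 2 = nerode_class P x (b # w @ [a])" "d2 !# 2 = nerode_class P x (w @ [a])"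
    using nerode_class_append[OF rcp x w1, of "[a]"] nerode_class_append[OF rcp x w2, of "[a]"]
    by (simp_all add: d1 d2 a1 a2)
  with x b show "\<exists>r'\<in>head_removal_rel P.
      r' !# 0 = r !# 0 \<and> r' !# 1 = r !# 1 \<and> r' !# 2 = d1 !# 2 \<and> r' !# 3 = d2 !# 2"
    by (intro bexI[OF _ head_removal_relI[of x b "w @ [a]"]]) (simp_all add: r)
qed

lemma canonical_invariant_cert: "invariant_cert (enc_protocol P) (canonical_cert P)"
  unfolding invariant_cert_def
  using canonical_dfa_ok canonical_good_init_ok canonical_good_send_closed canonical_good_recv_closed
    canonical_rel_init_ok canonical_rel_closed
  by simp

lemma canonical_run_cert:
  assumes cc: "channel_content P C"
  shows "run_cert (enc_protocol P) (canonical_cert P) (nerode_runs P C) (list_encode (map list_encode C))"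
  unfolding run_cert_def code_ex_iff nedges_c_enc_protocol
proof (intro allI impI conjI)
  fix x assume x: "x < nedges P"
  then show "nerode_runs P C !# x !# 0 = cert_init (canonical_cert P) x"
    using nerode_runs_code_nth[OF x, of 0] canonical_cert_simps(2)[OF wf rcp x] by simp
  have lC: "length C = nedges P" and cx: "C ! x \<in> lists (Msg P x)"
    using cc x by (auto simp: channel_content_def)
  fix k assume "k < code_length (list_encode (map list_encode C) !# x)"
  then have k: "k < length (C ! x)" using x lC by simp
  then have "C ! x ! k \<in> Msg P x" using cx by (simp add: in_lists_conv_set)
  moreover have "nerode_runs P C !# x !# k = nerode_class P x (take k (C ! x))"
    and "nerode_runs P C !# x !# Suc k = nerode_class P x (take k (C ! x) @ [C ! x ! k])"
    using nerode_runs_code_nth[OF x, of k] nerode_runs_code_nth[OF x, of "Suc k"] k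
    by (simp_all add: take_Suc_conv_app_nth)
  ultimately show "\<exists>d\<in>set (list_decode (cert_delta (canonical_cert P) x)).
      d !# 0 = nerode_runs P C !# x !# k \<and> d !# 1 = list_encode (map list_encode C) !# x !# k \<and>
      d !# 2 = nerode_runs P C !# x !# Suc k"
    using x k lC unfolding canonical_cert_simps[OF wf rcp x]
    by (intro bexI[of _ "list_encode [nerode_class P x (take k (C ! x)), C ! x ! k,
        nerode_class P x (take k (C ! x) @ [C ! x ! k])]"]) auto
qed

lemma unreach_cert_complete:
  assumes cc: "channel_content P C" and unreachable: "\<not> reachable P S C"
  obtains w where "unreach_cert (enc_protocol P) (list_encode S) (list_encode (map list_encode C)) w"
proof -
  have lC: "length C = nedges P" using cc by (simp add: channel_content_def)
  have "\<not> (\<exists>G\<in>abstract_reachable P. G !# 0 = list_encode S \<and>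
      (\<forall>x<nedges P. G !# 1 !# x = nerode_runs P C !# x !# length (C ! x)))"
  proof
    assume "\<exists>G\<in>abstract_reachable P. G !# 0 = list_encode S \<and>
      (\<forall>x<nedges P. G !# 1 !# x = nerode_runs P C !# x !# length (C ! x))"
    then obtain S' C' where r: "reachable P S' C'" and "list_encode S' = list_encode S"
      and "\<forall>x<nedges P. nerode_class P x (C' ! x) = nerode_runs P C !# x !# length (C ! x)"
      by (auto elim!: abstract_reachableE)
    then have "reachable P S C"
      using reachable_nerode_saturated[OF rcp wf r lC] nerode_runs_code_nth by (simp add: list_encode_eq)
    with unreachable show False ..
  qed
  then have "unreach_cert (enc_protocol P) (list_encode S) (list_encode (map list_encode C))
      (list_encode [canonical_cert P, nerode_runs P C])"
    using canonical_invariant_cert canonical_run_cert[OF cc] lC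
    by (simp add: unreach_cert_def code_ex_iff canonical_cert_good_rel[OF wf rcp])
  then show thesis by (rule that)
qed

lemma deadlock_free_cert_complete:
  assumes "deadlock_free P"
  shows "deadlock_free_cert (enc_protocol P) (canonical_cert P)"
  unfolding deadlock_free_cert_def code_all_iff code_ex_iff canonical_cert_good_rel[OF wf rcp]
    nedges_c_enc_protocol nnodes_c_enc_protocol
proof (intro conjI canonical_invariant_cert ballI impI)
  fix G assume G: "G \<in> abstract_reachable P"
    and c: "code_length (G !# 0) = nnodes P \<and> (\<forall>x<nedges P. G !# 1 !# x = cert_init (canonical_cert P) x)"
  from G obtain S C where r: "reachable P S C" and lS: "length S = nnodes P" and lC: "length C = nedges P"
    and G: "G = list_encode [list_encode S, list_encode (class_vector P C)]"
    by (rule abstract_reachableE)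
  have "reachable P S (C0 P)"
    using c lC by (intro reachable_nerode_saturated[OF rcp wf r]) (simp_all add: G C0_def canonical_cert_simps[OF wf rcp])
  then have "\<not> deadlocked P S (C0 P)" using assms unfolding deadlock_free_def by blast
  then obtain j b q where "j < nnodes P" "(S ! j, Snd b, q) \<in> Trans P j"
    unfolding deadlocked_def receive_state_def by auto
  then show "\<exists>j<nnodes P. \<exists>e\<in>set (list_decode (trans_c (enc_protocol P) j)).
      e !# 0 = G !# 0 !# j \<and> is_send_code (e !# 1)"
    using lS by (intro exI[of _ j] conjI bexI[of _ "enc_trans (S ! j, Snd b, q)"])
      (simp_all add: G set_list_decode_trans_c is_send_code_def)
qed

end

section \<open>Decidability\<close>

definition reach_witness :: "nat \<Rightarrow> nat \<Rightarrow> bool" where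
  "reach_witness z w \<longleftrightarrow> path_code (z !# 0) w \<and> last_code w !# 0 = z !# 1 \<and> last_code w !# 1 = z !# 2"

definition unreach_witness :: "nat \<Rightarrow> nat \<Rightarrow> bool" where
  "unreach_witness z w \<longleftrightarrow> unreach_cert (z !# 0) (z !# 1) (z !# 2) w"

definition deadlocked_code :: "nat \<Rightarrow> nat \<Rightarrow> bool" where
  "deadlocked_code pc g \<longleftrightarrow>
     (\<forall>j<nnodes_c pc. code_all (trans_c pc j) (\<lambda>e. e !# 0 = g !# 0 !# j \<longrightarrow> \<not> is_send_code (e !# 1)))
     \<and> (\<forall>x<nedges_c pc. code_length (g !# 1 !# x) = 0)"

definition deadlock_witness :: "nat \<Rightarrow> nat \<Rightarrow> bool" where
  "deadlock_witness pc w \<longleftrightarrow> path_code pc w \<and> deadlocked_code pc (last_code w)"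

lemmas path_code_defs =
  path_code_def step_code_def init_code_def last_code_def update_code_def snoc_code_def tl_code_def

lemmas invariant_cert_defs =
  invariant_cert_def dfa_ok_def good_init_ok_def good_send_closed_def good_recv_closed_def
  rel_init_ok_def rel_closed_def update_prefix_code_def update_code_def cert_accessor_defs

lemma decidable2_reach_witness: "decidable2 reach_witness"
  unfolding reach_witness_def path_code_defs protocol_decoder_defs by (intro computable_intros)

lemma decidable2_unreach_witness: "decidable2 unreach_witness"
  unfolding unreach_witness_def unreach_cert_def run_cert_def invariant_cert_defs protocol_decoder_defs
  by (intro computable_intros)

lemma decidable2_deadlock_free_cert: "decidable2 deadlock_free_cert"
  unfolding deadlock_free_cert_def is_send_code_def invariant_cert_defs protocol_decoder_defs
  by (intro computable_intros)

lemma decidable2_deadlock_witness: "decidable2 deadlock_witness"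
  unfolding deadlock_witness_def deadlocked_code_def is_send_code_def code_all_def path_code_defs
    protocol_decoder_defs
  by (intro computable_intros)

lemma enc_instance_code_nth [simp]:
  "enc_instance (P, S, C) !# 0 = enc_protocol P"
  "enc_instance (P, S, C) !# 1 = list_encode S"
  "enc_instance (P, S, C) !# Suc 0 = list_encode S"
  "enc_instance (P, S, C) !# 2 = list_encode (map list_encode C)"
  by (simp_all add: enc_instance_def)

lemma reachable_iff_reach_witness:
  assumes "wf_protocol P"
  shows "reachable P S C \<longleftrightarrow> (\<exists>w. reach_witness (enc_instance (P, S, C)) w)"
proof
  assume "reachable P S C"
  then obtain w where "path_code (enc_protocol P) w" "last_code w = gstate_code S C"
    using reachable_path_code[OF assms] by blast
  then show "\<exists>w. reach_witness (enc_instance (P, S, C)) w"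
    unfolding reach_witness_def by auto
next
  assume "\<exists>w. reach_witness (enc_instance (P, S, C)) w"
  then obtain w where "path_code (enc_protocol P) w" "decode_gstate (last_code w) = (S, C)"
    unfolding reach_witness_def by (auto simp: decode_gstate_def comp_def)
  then show "reachable P S C" using path_code_reachable[OF assms] by fastforce
qed

lemma unreachable_iff_unreach_witness:
  assumes "wf_protocol P" "recognizable_channel_property P" "channel_content P C"
  shows "\<not> reachable P S C \<longleftrightarrow> (\<exists>w. unreach_witness (enc_instance (P, S, C)) w)"
proof
  assume "\<not> reachable P S C"
  then obtain w where "unreach_cert (enc_protocol P) (list_encode S) (list_encode (map list_encode C)) w"
    by (rule unreach_cert_complete[OF assms])
  then show "\<exists>w. unreach_witness (enc_instance (P, S, C)) w"
    unfolding unreach_witness_def by auto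
next
  assume "\<exists>w. unreach_witness (enc_instance (P, S, C)) w"
  then show "\<not> reachable P S C"
    using unreach_cert_sound[OF assms(1,3)] unfolding unreach_witness_def by auto
qed

lemma deadlock_free_iff_cert:
  assumes "wf_protocol P" "recognizable_channel_property P"
  shows "deadlock_free P \<longleftrightarrow> (\<exists>I. deadlock_free_cert (enc_protocol P) I)"
  using deadlock_free_cert_complete[OF assms] deadlock_free_cert_sound[OF assms(1)] by blast

lemma not_deadlock_free_iff_deadlock_witness:
  assumes wf: "wf_protocol P"
  shows "\<not> deadlock_free P \<longleftrightarrow> (\<exists>w. deadlock_witness (enc_protocol P) w)"
proof
  assume "\<not> deadlock_free P"
  then obtain S C where r: "reachable P S C" and d: "deadlocked P S C"
    unfolding deadlock_free_def by blast
  from reachable_path_code[OF wf r] obtain w where "path_code (enc_protocol P) w" "last_code w = gstate_code S C" .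
  with d reachable_lengths[OF wf r] show "\<exists>w. deadlock_witness (enc_protocol P) w"
    unfolding deadlock_witness_def deadlocked_code_def deadlocked_def receive_state_def
    by (auto simp: C0_def)
next
  assume "\<exists>w. deadlock_witness (enc_protocol P) w"
  then obtain w where p: "path_code (enc_protocol P) w" and d: "deadlocked_code (enc_protocol P) (last_code w)"
    unfolding deadlock_witness_def by blast
  obtain S C where g: "decode_gstate (last_code w) = (S, C)" by fastforce
  with path_code_reachable[OF wf p] have r: "reachable P S C" by simp
  have lS: "length S = nnodes P" and lC: "length C = nedges P" using reachable_lengths[OF wf r] by auto
  have S: "last_code w !# 0 = list_encode S" and C: "last_code w !# 1 = list_encode (map list_encode C)"
    using decode_gstate_code_nth[of "last_code w"] g by simp_all
  have "receive_state P j (S ! j)" if "j < nnodes P" for j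
    using d that lS unfolding deadlocked_code_def S receive_state_def by force
  moreover have "C = C0 P"
    using d lC unfolding deadlocked_code_def C by (intro nth_equalityI) (simp_all add: C0_def)
  ultimately have "deadlocked P S C" by (simp add: deadlocked_def)
  with r show "\<not> deadlock_free P" unfolding deadlock_free_def by blast
qed

theorem corollary9p6:
  shows "(\<exists>f. decides_on f enc_instance
             (\<lambda>(P, S, C). wf_protocol P \<and> recognizable_channel_property P \<and> global_state P S C)
             (\<lambda>(P, S, C). reachable P S C))
       \<and> (\<exists>g. decides_on g enc_protocol
             (\<lambda>P. wf_protocol P \<and> recognizable_channel_property P)
             deadlock_free)"
proof
  show "\<exists>f. decides_on f enc_instance
      (\<lambda>(P, S, C). wf_protocol P \<and> recognizable_channel_property P \<and> global_state P S C)
      (\<lambda>(P, S, C). reachable P S C)"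
    by (rule decides_on_by_witnesses[OF decidable2_reach_witness decidable2_unreach_witness])
      (clarsimp simp: reachable_iff_reach_witness,
       clarsimp simp: global_state_def unreachable_iff_unreach_witness)
  show "\<exists>g. decides_on g enc_protocol (\<lambda>P. wf_protocol P \<and> recognizable_channel_property P) deadlock_free"
    by (rule decides_on_by_witnesses[OF decidable2_deadlock_free_cert decidable2_deadlock_witness])
      (clarsimp simp: deadlock_free_iff_cert, clarsimp simp: not_deadlock_free_iff_deadlock_witness)
qed

end
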